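(* Let $(\mathcal B,\phi)$ be a noncommutative $*$-probability space, $t\ge0$, and $f_1,\dots,f_n\in\mathcal B^\circ$. (a) $R^{\Psi_t}[X(f_1),\dots,X(f_n)]=t\,B^\phi[f_1,\dots,f_n]$. Consequently \[ \mu^{\Psi_t}_{X(f_1), \ldots, X(f_n)} = \mathbb{B}_t(\mu_{f_1, \ldots, f_n})^{\uplus t} = \left( \mu^{\Phi_t}_{X(f_1), \ldots, X(f_n)} \right)^{\uplus \frac{t}{1+t}}. \] (b) The conditionally free cumulants with respect to the pair $(\Phi_t,\Psi_t)$ are $R^{(\Phi_t,\Psi_t)}[X(f_1),\dots,X(f_n)]=(1+t)B^\phi[f_1,\dots,f_n]$.
   Context: $\mathcal B$ is a unital $*$-algebra, $\phi$ a state, $\mathcal B^\circ=\ker\phi$. $\mathcal T(\mathcal B,\phi)=\mathbb C1\oplus\bigoplus_{n\ge1}(\mathcal B^\circ)^{\otimes n}$ with concatenation product and involution $(f_1\otimes\cdots\otimes f_n)^*=f_n^*\otimes\cdots\otimes f_1^*$; $f_1\otimes\cdots\otimes f_n$ is written $X(f_1)\cdots X(f_n)$. Let $\Lambda(f,g)=fg-\phi[fg]1$; for $f_1,\dots,f_n\in\mathcal B^\circ$ and $V=\{i(1)<\dots<i(k)\}$, $k\ge2$, $W(V)=f_{i(1)}f_{i(2)}$ if $k=2$, $W(V)=f_{i(1)}\Lambda(f_{i(2)},\Lambda(\ldots,\Lambda(f_{i(k-1)},f_{i(k)})\cdots))$ if $k\ge3$. $\mathrm{NC}_{ns}(n)$: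 noncrossing partitions of $\{1,\dots,n\}$ without singletons; a block $V$ is inner if some other block $U$ has $i<j<k$ with $j\in V$, $i,k\in U$, otherwise outer. $\Phi_t,\Psi_t$ are the linear functionals with value $1$ at $1$ and $\Phi_t[X(f_1)\cdots X(f_n)]=\sum_{\pi\in\mathrm{NC}_{ns}(n)}(1+t)^{|\mathrm{Outer}(\pi)|}t^{|\mathrm{Inner}(\pi)|}\prod_{V\in\pi}\phi[W(V)]$, $\Psi_t[X(f_1)\cdots X(f_n)]=\sum_{\pi\in\mathrm{NC}_{ns}(n)}t^{|\pi|}\prod_{V\in\pi}\phi[W(V)]$. Cumulants (arguments in each block in increasing order): free cumulants $R^\omega$ via $\omega[a_1\cdots a_n]=\sum_{\pi\in\mathrm{NC}(n)}\prod_{V\in\pi}R^\omega[a_i:i\in V]$; Boolean cumulants $B^\omega$ via the same formula summed over interval partitions; conditionally free cumulants $R^{(\omega,\psi)}$ via $\omega[a_1\cdots a_n]=\sum_{\pi\in\mathrm{NC}(n)}\prod_{V\in\mathrm{Inner}(\pi)}R^\psi[a_i:i\in V]\prod_{U\in\mathrm{Outer}(\pi)}R^{(\omega,\psi)}[a_i:i\in U]$. $\mu$ with indices denotes joint distribution (functional on noncommutative polynomials). $\mu^{\boxplus s}$ (resp. $\mu^{\uplus s}$) is the functional whose free (resp. Boolean) cumulants are $s$ times those of $\mu$; the Belinschi–Nica transformation is $\mathbb B_t(\mu)=(\mu^{\boxplus(1+t)})^{\uplus\frac1{1+t}}$. *)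

theory Defs
  imports Complex_Main "HOL-Library.Disjoint_Sets"
begin

definition star_prob_space ::
  "(complex \<Rightarrow> 'b::ring_1 \<Rightarrow> 'b) \<Rightarrow> ('b \<Rightarrow> 'b) \<Rightarrow> ('b \<Rightarrow> complex) \<Rightarrow> bool" where
  "star_prob_space smul star phi \<longleftrightarrow>
     module smul \<and>
     (\<forall>c x y. smul c (x * y) = smul c x * y \<and> smul c (x * y) = x * smul c y) \<and>
     (\<forall>x y. star (x + y) = star x + star y) \<and>
     (\<forall>c x. star (smul c x) = smul (cnj c) (star x)) \<and>
     (\<forall>x y. star (x * y) = star y * star x) \<and>
     (\<forall>x. star (star x) = x) \<and>
     (\<forall>x y. phi (x + y) = phi x + phi y) \<and>
     (\<forall>c x. phi (smul c x) = c * phi x) \<and>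
     phi 1 = 1 \<and>
     (\<forall>a. Im (phi (star a * a)) = 0 \<and> Re (phi (star a * a)) \<ge> 0)"

definition noncrossing :: "nat set set \<Rightarrow> bool" where
  "noncrossing P \<longleftrightarrow> (\<forall>V\<in>P. \<forall>U\<in>P. V \<noteq> U \<longrightarrow>
     \<not> (\<exists>a b c d. a < b \<and> b < c \<and> c < d \<and> a \<in> V \<and> c \<in> V \<and> b \<in> U \<and> d \<in> U))"

definition NC :: "nat \<Rightarrow> nat set set set" where
  "NC n = {P. partition_on {..<n} P \<and> noncrossing P}"

definition interval_partitions :: "nat \<Rightarrow> nat set set set" where
  "interval_partitions n = {P. partition_on {..<n} P \<and>
     (\<forall>V\<in>P. \<forall>i j k. i < j \<and> j < k \<and> i \<in> V \<and> k \<in> V \<longrightarrow> j \<in> V)}"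

definition NC_ns :: "nat \<Rightarrow> nat set set set" where
  "NC_ns n = {P \<in> NC n. \<forall>V\<in>P. card V \<ge> 2}"

definition inner_blocks :: "nat set set \<Rightarrow> nat set set" where
  "inner_blocks P = {V\<in>P. \<exists>U\<in>P. U \<noteq> V \<and>
     (\<exists>i j k. i < j \<and> j < k \<and> j \<in> V \<and> i \<in> U \<and> k \<in> U)}"

definition outer_blocks :: "nat set set \<Rightarrow> nat set set" where
  "outer_blocks P = P - inner_blocks P"

text \<open>A functional omega evaluated on products a_1...a_k of the variables is
represented by its moment function m with m [a_1,...,a_k] = omega[a_1 ... a_k].
The restriction of the argument list to a block V (indices in increasing order)
is nths as V.\<close>

definition free_cum :: "('a list \<Rightarrow> complex) \<Rightarrow> 'a list \<Rightarrow> complex" where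
  "free_cum m = (THE R. R [] = 0 \<and> (\<forall>as. as \<noteq> [] \<longrightarrow>
      m as = (\<Sum>P\<in>NC (length as). \<Prod>V\<in>P. R (nths as V))))"

definition bool_cum :: "('a list \<Rightarrow> complex) \<Rightarrow> 'a list \<Rightarrow> complex" where
  "bool_cum m = (THE R. R [] = 0 \<and> (\<forall>as. as \<noteq> [] \<longrightarrow>
      m as = (\<Sum>P\<in>interval_partitions (length as). \<Prod>V\<in>P. R (nths as V))))"

definition cfree_cum ::
  "('a list \<Rightarrow> complex) \<Rightarrow> ('a list \<Rightarrow> complex) \<Rightarrow> 'a list \<Rightarrow> complex" where
  "cfree_cum m mpsi = (THE R. R [] = 0 \<and> (\<forall>as. as \<noteq> [] \<longrightarrow>
      m as = (\<Sum>P\<in>NC (length as).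
                (\<Prod>V\<in>inner_blocks P. free_cum mpsi (nths as V)) *
                (\<Prod>U\<in>outer_blocks P. R (nths as U)))))"

text \<open>A joint distribution of n variables is a functional on noncommutative
polynomials in x_0,...,x_{n-1}; it is represented by its values on monomials,
i.e. by a function on words (lists of indices < n).\<close>

type_synonym distr = "nat list \<Rightarrow> complex"

definition free_pow :: "real \<Rightarrow> distr \<Rightarrow> distr" where
  "free_pow s mu = (\<lambda>w. \<Sum>P\<in>NC (length w). \<Prod>V\<in>P. of_real s * free_cum mu (nths w V))"

definition bool_pow :: "real \<Rightarrow> distr \<Rightarrow> distr" where
  "bool_pow s mu = (\<lambda>w. \<Sum>P\<in>interval_partitions (length w).
                         \<Prod>V\<in>P. of_real s * bool_cum mu (nths w V))"

definition BN_transform :: "real \<Rightarrow> distr \<Rightarrow> distr" where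
  "BN_transform t mu = bool_pow (1 / (1 + t)) (free_pow (1 + t) mu)"

definition joint_distr :: "('x list \<Rightarrow> complex) \<Rightarrow> 'x list \<Rightarrow> distr" where
  "joint_distr m xs = (\<lambda>w. m (map (\<lambda>i. xs ! i) w))"

definition Lam :: "(complex \<Rightarrow> 'b::ring_1 \<Rightarrow> 'b) \<Rightarrow> ('b \<Rightarrow> complex) \<Rightarrow> 'b \<Rightarrow> 'b \<Rightarrow> 'b" where
  "Lam smul phi f g = f * g - smul (phi (f * g)) 1"

fun lam_chain :: "(complex \<Rightarrow> 'b::ring_1 \<Rightarrow> 'b) \<Rightarrow> ('b \<Rightarrow> complex) \<Rightarrow> 'b list \<Rightarrow> 'b" where
  "lam_chain smul phi [a, b] = Lam smul phi a b"
| "lam_chain smul phi (a # b # c # rest) = Lam smul phi a (lam_chain smul phi (b # c # rest))"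
| "lam_chain smul phi _ = 1"

fun Wblock :: "(complex \<Rightarrow> 'b::ring_1 \<Rightarrow> 'b) \<Rightarrow> ('b \<Rightarrow> complex) \<Rightarrow> 'b list \<Rightarrow> 'b" where
  "Wblock smul phi [a, b] = a * b"
| "Wblock smul phi (a # b # c # rest) = a * lam_chain smul phi (b # c # rest)"
| "Wblock smul phi _ = 1"

text \<open>Values of Phi_t and Psi_t on the words X(f_1)...X(f_n); the functionals on
T(B,phi) are the linear extensions (value 1 at the empty word).\<close>

definition Phi_t :: "(complex \<Rightarrow> 'b::ring_1 \<Rightarrow> 'b) \<Rightarrow> ('b \<Rightarrow> complex) \<Rightarrow> real \<Rightarrow> 'b list \<Rightarrow> complex" where
  "Phi_t smul phi t fs = (if fs = [] then 1 else
     (\<Sum>P\<in>NC_ns (length fs). of_real (1 + t) ^ card (outer_blocks P) *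
        of_real t ^ card (inner_blocks P) * (\<Prod>V\<in>P. phi (Wblock smul phi (nths fs V)))))"

definition Psi_t :: "(complex \<Rightarrow> 'b::ring_1 \<Rightarrow> 'b) \<Rightarrow> ('b \<Rightarrow> complex) \<Rightarrow> real \<Rightarrow> 'b list \<Rightarrow> complex" where
  "Psi_t smul phi t fs = (if fs = [] then 1 else
     (\<Sum>P\<in>NC_ns (length fs). of_real t ^ card P * (\<Prod>V\<in>P. phi (Wblock smul phi (nths fs V)))))"

end

(*
  For centred f_i the Boolean cumulants of phi are B[f_1, ..., f_n] = phi[W(1..n)]: expanding
  f_1 ... f_n along the nested Lambda's gives exactly the Boolean moment-cumulant recursion.
  The defining sums of Psi_t and Phi_t are then literally the free moment-cumulant formula with
  cumulants t B, resp. the conditionally free one with (1 + t) B on outer and t B on inner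
  blocks, which proves the cumulant identities in (a) and (b).

  For the distributions, group the blocks of a noncrossing partition into irreducible
  components: Boolean cumulants are sums over irreducible noncrossing partitions, and comparing
  these sums for Psi_t and Phi_t gives B^Psi_t = t/(1+t) B^Phi_t. Writing B itself as such a sum
  of the free cumulants R of phi and resumming shows that Phi_t has free cumulants (1 + t) R,
  i.e. it is the free convolution power of exponent 1 + t; with the Boolean rescalings this is
  the Belinschi-Nica formula. All noncrossing sums are computed by one recursion that grows
  the block of the largest point downwards.
*)

theory Submission
  imports Defs
begin

section \<open>Cumulants defined by moment--cumulant formulas\<close>

lemma partition_on_single_block:
  assumes "partition_on A P" "A \<in> P"
  shows "P = {A}"
proof -
  have "W = A" if "W \<in> P" for W
  proof -
    have "W \<subseteq> A" "W \<noteq> {}" using assms(1) that by (auto simp: partition_on_def)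
    then show ?thesis using assms that unfolding partition_on_def disjoint_def by blast
  qed
  then show ?thesis using assms(2) by blast
qed

lemma card_block_less:
  assumes "partition_on {..<n} P" "P \<noteq> {{..<n}}" "V \<in> P"
  shows "card V < n"
proof -
  have "V \<subseteq> {..<n}" "V \<noteq> {..<n}"
    using assms partition_on_single_block[OF assms(1)] by (auto simp: partition_on_def)
  then show ?thesis by (metis card_lessThan finite_lessThan psubset_card_mono psubsetI)
qed

lemma length_nths_subset: "V \<subseteq> {..<length xs} \<Longrightarrow> length (nths xs V) = card V"
  by (simp add: length_nths) (metis (no_types, lifting) Collect_cong Collect_mem_eq lessThan_iff subset_eq)

lemma nths_nonempty: "V \<subseteq> {..<length xs} \<Longrightarrow> V \<noteq> {} \<Longrightarrow> nths xs V \<noteq> []"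
  using length_nths_subset[of V xs] finite_subset[of V "{..<length xs}"]
  by (metis card_0_eq finite_lessThan length_0_conv)

lemma nths_in_lists: "xs \<in> lists A \<Longrightarrow> nths xs V \<in> lists A"
  using set_nths_subset[of xs V] by (auto simp: in_lists_conv_set)

locale moment_cumulant =
  fixes parts :: "nat \<Rightarrow> nat set set set"
    and weight :: "('a list \<Rightarrow> complex) \<Rightarrow> 'a list \<Rightarrow> nat set set \<Rightarrow> complex"
  assumes finite_parts: "finite (parts n)"
    and single_block_in_parts: "n > 0 \<Longrightarrow> {{..<n}} \<in> parts n"
    and partition_on_parts: "P \<in> parts n \<Longrightarrow> partition_on {..<n} P"
    and weight_single_block: "as \<noteq> [] \<Longrightarrow> weight R as {{..<length as}} = R as"
    and weight_cong: "P \<in> parts (length as) \<Longrightarrow>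
          (\<And>V. V \<in> P \<Longrightarrow> R (nths as V) = R' (nths as V)) \<Longrightarrow> weight R as P = weight R' as P"
begin

abbreviation proper_parts :: "nat \<Rightarrow> nat set set set" where
  "proper_parts n \<equiv> parts n - {{{..<n}}}"

lemma sum_parts_split:
  "as \<noteq> [] \<Longrightarrow> (\<Sum>P\<in>parts (length as). weight R as P) =
     R as + (\<Sum>P\<in>proper_parts (length as). weight R as P)"
  using single_block_in_parts[of "length as"] finite_parts
  by (simp add: sum.remove weight_single_block)

lemma weight_cong_shorter:
  assumes "P \<in> proper_parts (length as)" "as \<in> lists A"
    and "\<And>bs. bs \<in> lists A \<Longrightarrow> bs \<noteq> [] \<Longrightarrow> length bs < length as \<Longrightarrow> R bs = R' bs"
  shows "weight R as P = weight R' as P"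
proof (rule weight_cong)
  show "P \<in> parts (length as)" using assms(1) by simp
  fix V assume "V \<in> P"
  moreover note partition_on_parts[of P "length as"]
  ultimately have "V \<subseteq> {..<length as}" "V \<noteq> {}" "card V < length as"
    using assms(1) card_block_less by (auto simp: partition_on_def)
  then show "R (nths as V) = R' (nths as V)"
    using assms(2,3) nths_in_lists nths_nonempty length_nths_subset by metis
qed

lemma cumulants_agree:
  assumes "\<And>bs. bs \<in> lists A \<Longrightarrow> bs \<noteq> [] \<Longrightarrow> m bs = (\<Sum>P\<in>parts (length bs). weight R bs P)"
    and "\<And>bs. bs \<in> lists A \<Longrightarrow> bs \<noteq> [] \<Longrightarrow> m bs = (\<Sum>P\<in>parts (length bs). weight R' bs P)"
  shows "as \<in> lists A \<Longrightarrow> as \<noteq> [] \<Longrightarrow> R as = R' as"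
proof (induction "length as" arbitrary: as rule: less_induct)
  case less
  have "(\<Sum>P\<in>proper_parts (length as). weight R as P) = (\<Sum>P\<in>proper_parts (length as). weight R' as P)"
    using less by (intro sum.cong refl weight_cong_shorter) auto
  then show ?case
    using assms[OF less.prems] sum_parts_split[OF less.prems(2)] by simp
qed

lemma cumulants_exist:
  "\<exists>R. R [] = 0 \<and> (\<forall>as. as \<noteq> [] \<longrightarrow> m as = (\<Sum>P\<in>parts (length as). weight R as P))"
proof -
  define F where "F R as = (if as = [] then 0 else
     m as - (\<Sum>P\<in>proper_parts (length as). weight R as P))" for R as
  have "adm_wf (measure length) F"
    unfolding adm_wf_def
  proof (intro allI impI)
    fix R R' :: "'a list \<Rightarrow> complex" and as
    assume "\<forall>bs. (bs, as) \<in> measure length \<longrightarrow> R bs = R' bs"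
    then have "(\<Sum>P\<in>proper_parts (length as). weight R as P) = (\<Sum>P\<in>proper_parts (length as). weight R' as P)"
      by (intro sum.cong refl weight_cong_shorter[where A = UNIV]) auto
    then show "F R as = F R' as" by (simp add: F_def)
  qed
  then have fixpoint: "wfrec (measure length) F = F (wfrec (measure length) F)"
    by (rule wfrec_fixpoint[OF wf_measure])
  define R where "R = wfrec (measure length) F"
  have "R [] = 0" using fun_cong[OF fixpoint, of "[]"] by (simp add: R_def F_def)
  moreover have "m as = (\<Sum>P\<in>parts (length as). weight R as P)" if "as \<noteq> []" for as
    using fun_cong[OF fixpoint, of as] that by (simp add: R_def[symmetric] F_def sum_parts_split)
  ultimately show ?thesis by blast
qed

lemma ex1_cumulant:
  "\<exists>!R. R [] = 0 \<and> (\<forall>as. as \<noteq> [] \<longrightarrow> m as = (\<Sum>P\<in>parts (length as). weight R as P))"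
proof -
  have "R = R'" if "R [] = 0 \<and> (\<forall>as. as \<noteq> [] \<longrightarrow> m as = (\<Sum>P\<in>parts (length as). weight R as P))"
    and "R' [] = 0 \<and> (\<forall>as. as \<noteq> [] \<longrightarrow> m as = (\<Sum>P\<in>parts (length as). weight R' as P))" for R R'
    using cumulants_agree[of UNIV m R R'] that by (metis UNIV_I ext lists_UNIV)
  then show ?thesis using cumulants_exist by blast
qed

lemma cumulant_characterization:
  assumes "C = (THE R. R [] = 0 \<and> (\<forall>as. as \<noteq> [] \<longrightarrow> m as = (\<Sum>P\<in>parts (length as). weight R as P)))"
  shows cumulant_Nil: "C [] = 0"
    and moment_cumulant_formula: "as \<noteq> [] \<Longrightarrow> m as = (\<Sum>P\<in>parts (length as). weight C as P)"
    and cumulant_eqI: "\<lbrakk>as \<in> lists A; as \<noteq> [];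
          \<And>bs. bs \<in> lists A \<Longrightarrow> bs \<noteq> [] \<Longrightarrow> m bs = (\<Sum>P\<in>parts (length bs). weight R' bs P)\<rbrakk>
        \<Longrightarrow> C as = R' as"
proof -
  have C: "C [] = 0 \<and> (\<forall>as. as \<noteq> [] \<longrightarrow> m as = (\<Sum>P\<in>parts (length as). weight C as P))"
    unfolding assms by (rule theI'[OF ex1_cumulant])
  then show "C [] = 0" "as \<noteq> [] \<Longrightarrow> m as = (\<Sum>P\<in>parts (length as). weight C as P)" by blast+
  show "C as = R' as"
    if "as \<in> lists A" "as \<noteq> []"
      "\<And>bs. bs \<in> lists A \<Longrightarrow> bs \<noteq> [] \<Longrightarrow> m bs = (\<Sum>P\<in>parts (length bs). weight R' bs P)"
    using cumulants_agree[of A m C R'] C that by blast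
qed

end

lemma finite_NC: "finite (NC n)"
  by (rule finite_subset[OF _ finitely_many_partition_on[of "{..<n}"]]) (auto simp: NC_def)

lemma finite_interval_partitions: "finite (interval_partitions n)"
  by (rule finite_subset[OF _ finitely_many_partition_on[of "{..<n}"]])
     (auto simp: interval_partitions_def)

lemma partition_on_NC: "P \<in> NC n \<Longrightarrow> partition_on {..<n} P"
  by (simp add: NC_def)

lemma partition_on_interval_partitions: "P \<in> interval_partitions n \<Longrightarrow> partition_on {..<n} P"
  by (simp add: interval_partitions_def)

lemma single_block_NC: "n > 0 \<Longrightarrow> {{..<n}} \<in> NC n"
  by (auto simp: NC_def noncrossing_def intro: partition_on_space)

lemma single_block_interval_partitions: "n > 0 \<Longrightarrow> {{..<n}} \<in> interval_partitions n"
  by (auto simp: interval_partitions_def intro: partition_on_space)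

lemma inner_blocks_single: "inner_blocks {A} = {}"
  by (auto simp: inner_blocks_def)

lemma outer_blocks_single: "outer_blocks {A} = {A}"
  by (simp add: outer_blocks_def inner_blocks_single)

lemma moment_cumulant_free: "moment_cumulant NC (\<lambda>R as P. \<Prod>V\<in>P. R (nths as V))"
  by unfold_locales (auto simp: finite_NC single_block_NC partition_on_NC intro: prod.cong)

lemma moment_cumulant_boolean:
  "moment_cumulant interval_partitions (\<lambda>R as P. \<Prod>V\<in>P. R (nths as V))"
  by unfold_locales
     (auto simp: finite_interval_partitions single_block_interval_partitions
        partition_on_interval_partitions intro: prod.cong)

lemma moment_cumulant_cfree:
  "moment_cumulant NC (\<lambda>R as P. (\<Prod>V\<in>inner_blocks P. free_cum mpsi (nths as V)) *
                                 (\<Prod>U\<in>outer_blocks P. R (nths as U)))"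
  by unfold_locales
     (auto simp: finite_NC single_block_NC partition_on_NC inner_blocks_single outer_blocks_single
        outer_blocks_def intro: prod.cong)

lemmas free_cum_Nil = moment_cumulant.cumulant_Nil[OF moment_cumulant_free free_cum_def]
lemmas free_cum_formula = moment_cumulant.moment_cumulant_formula[OF moment_cumulant_free free_cum_def]
lemmas free_cum_eqI = moment_cumulant.cumulant_eqI[OF moment_cumulant_free free_cum_def]
lemmas bool_cum_Nil = moment_cumulant.cumulant_Nil[OF moment_cumulant_boolean bool_cum_def]
lemmas bool_cum_formula =
  moment_cumulant.moment_cumulant_formula[OF moment_cumulant_boolean bool_cum_def]
lemmas bool_cum_eqI = moment_cumulant.cumulant_eqI[OF moment_cumulant_boolean bool_cum_def]
lemmas cfree_cum_eqI = moment_cumulant.cumulant_eqI[OF moment_cumulant_cfree cfree_cum_def]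

section \<open>Interval partitions\<close>

lemma interval_partitions_0: "interval_partitions 0 = {{}}"
  by (auto simp: interval_partitions_def partition_on_empty)

lemma interval_partitionsI:
  "partition_on {..<n} P \<Longrightarrow> (\<And>V i j k. V \<in> P \<Longrightarrow> i < j \<Longrightarrow> j < k \<Longrightarrow> i \<in> V \<Longrightarrow> k \<in> V \<Longrightarrow> j \<in> V)
   \<Longrightarrow> P \<in> interval_partitions n"
  unfolding interval_partitions_def by blast

lemma interval_partitionsD:
  "P \<in> interval_partitions n \<Longrightarrow> V \<in> P \<Longrightarrow> i < j \<Longrightarrow> j < k \<Longrightarrow> i \<in> V \<Longrightarrow> k \<in> V \<Longrightarrow> j \<in> V"
  unfolding interval_partitions_def by blast

lemma interval_partitions_insert_last:
  assumes "P \<in> interval_partitions j" "j < n"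
  shows "insert {j..<n} P \<in> interval_partitions n"
proof -
  have p: "partition_on {..<j} P" using assms(1) by (simp add: interval_partitions_def)
  have "\<Union>P = {..<j}" using partition_onD1[OF p] by simp
  then have "disjnt {j..<n} (\<Union>P)" by (auto simp: disjnt_def)
  moreover have "{..<n} - {j..<n} = {..<j}" using assms(2) by auto
  ultimately have "partition_on {..<n} (insert {j..<n} P)"
    using partition_on_insert p assms(2) by fastforce
  then show ?thesis
    by (rule interval_partitionsI) (auto dest: interval_partitionsD[OF assms(1)])
qed

lemma interval_partitions_last_block:
  assumes "P \<in> interval_partitions n" "n > 0"
  obtains j where "j < n" "{j..<n} \<in> P" "P - {{j..<n}} \<in> interval_partitions j"
proof -
  have p: "partition_on {..<n} P" using assms(1) by (simp add: interval_partitions_def)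
  obtain V where V: "V \<in> P" "n - 1 \<in> V"
    using partition_onD1[OF p] assms(2) by (metis UnionE diff_less lessThan_iff zero_less_one)
  have Vsub: "V \<subseteq> {..<n}" using p V by (auto simp: partition_on_def)
  define j where "j = Min V"
  have fin: "finite V" using finite_subset[OF Vsub] by simp
  have jV: "j \<in> V" using Min_in[OF fin] V(2) by (auto simp: j_def)
  have jmin: "\<And>x. x \<in> V \<Longrightarrow> j \<le> x" using fin by (simp add: j_def)
  have between: "x \<in> V" if "j < x" "x < n - 1" for x
    using interval_partitionsD[OF assms(1) V(1) _ _ jV V(2)] that by blast
  have Veq: "V = {j..<n}"
  proof
    show "V \<subseteq> {j..<n}" using Vsub jmin by auto
    show "{j..<n} \<subseteq> V"
    proof
      fix x assume "x \<in> {j..<n}"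
      then consider "x = j" | "x = n - 1" | "j < x" "x < n - 1" by fastforce
      then show "x \<in> V" using jV V(2) between by cases auto
    qed
  qed
  have jn: "j < n" using jV Vsub by auto
  have d: "disjnt V (\<Union>(P - {V}))"
    using partition_onD2[OF p] V(1) by (auto simp: disjnt_def disjoint_def)
  have "partition_on {..<n} (insert V (P - {V}))" using p V(1) by (simp add: insert_absorb)
  then have "partition_on ({..<n} - V) (P - {V})" using partition_on_insert[OF d] by blast
  moreover have "{..<n} - V = {..<j}" using Veq jn by auto
  ultimately have "P - {V} \<in> interval_partitions j"
    by (auto intro: interval_partitionsI dest: interval_partitionsD[OF assms(1)])
  then show ?thesis using that jn V(1) Veq by blast
qed

lemma last_block_notin_interval_partitions:
  "P \<in> interval_partitions j \<Longrightarrow> j < n \<Longrightarrow> {j..<n} \<notin> P"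
proof
  assume "P \<in> interval_partitions j" "j < n" "{j..<n} \<in> P"
  then have "j \<in> \<Union>P" by (intro UnionI[of "{j..<n}"]) auto
  then show False
    using partition_onD1[OF partition_on_interval_partitions[OF \<open>P \<in> interval_partitions j\<close>]] by auto
qed

lemma interval_partitions_UN_last_block:
  "n > 0 \<Longrightarrow> interval_partitions n = (\<Union>j<n. insert {j..<n} ` interval_partitions j)"
proof
  assume "n > 0"
  show "interval_partitions n \<subseteq> (\<Union>j<n. insert {j..<n} ` interval_partitions j)"
  proof
    fix P assume "P \<in> interval_partitions n"
    then obtain j where "j < n" "{j..<n} \<in> P" "P - {{j..<n}} \<in> interval_partitions j"
      using interval_partitions_last_block \<open>n > 0\<close> by blast
    then show "P \<in> (\<Union>j<n. insert {j..<n} ` interval_partitions j)"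
      by (auto intro!: bexI[of _ j] image_eqI[of _ _ "P - {{j..<n}}"])
  qed
qed (use interval_partitions_insert_last in auto)

lemma interval_partitions_last_block_disjoint:
  assumes "i < n" "j < n" "i \<noteq> j"
  shows "insert {i..<n} ` interval_partitions i \<inter> insert {j..<n} ` interval_partitions j = {}"
proof (rule ccontr)
  assume "insert {i..<n} ` interval_partitions i \<inter> insert {j..<n} ` interval_partitions j \<noteq> {}"
  then obtain P where Pi: "P \<in> insert {i..<n} ` interval_partitions i"
    and Pj: "P \<in> insert {j..<n} ` interval_partitions j" by blast
  have "P \<in> interval_partitions n" using Pi interval_partitions_insert_last assms by auto
  then have "disjoint P" using partition_on_interval_partitions partition_onD2 by blast
  moreover have "{i..<n} \<in> P" "{j..<n} \<in> P" using Pi Pj by auto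
  moreover have "n - 1 \<in> {i..<n} \<inter> {j..<n}" using assms by auto
  ultimately have "{i..<n} = {j..<n}" unfolding disjoint_def by blast
  then show False using assms by (metis atLeastLessThan_inj(1) atLeastLessThan_empty_iff2)
qed

lemma sum_interval_partitions_last_block:
  fixes C :: "nat set \<Rightarrow> 'a::comm_semiring_1"
  assumes "n > 0"
  shows "(\<Sum>P\<in>interval_partitions n. \<Prod>V\<in>P. C V) =
         (\<Sum>j<n. (\<Sum>P\<in>interval_partitions j. \<Prod>V\<in>P. C V) * C {j..<n})"
proof -
  have "(\<Sum>P\<in>interval_partitions n. \<Prod>V\<in>P. C V) =
        (\<Sum>j<n. \<Sum>P\<in>insert {j..<n} ` interval_partitions j. \<Prod>V\<in>P. C V)"
    unfolding interval_partitions_UN_last_block[OF assms]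
    by (rule sum.UNION_disjoint)
       (auto simp: finite_interval_partitions interval_partitions_last_block_disjoint)
  also have "\<dots> = (\<Sum>j<n. (\<Sum>P\<in>interval_partitions j. \<Prod>V\<in>P. C V) * C {j..<n})"
  proof (rule sum.cong[OF refl])
    fix j assume j: "j \<in> {..<n}"
    have inj: "inj_on (insert {j..<n}) (interval_partitions j)"
      using last_block_notin_interval_partitions j by (intro inj_onI) (metis insert_ident lessThan_iff)
    have fin: "finite P" if "P \<in> interval_partitions j" for P
      using partition_on_interval_partitions[OF that] finite_elements by blast
    have "(\<Sum>P\<in>insert {j..<n} ` interval_partitions j. \<Prod>V\<in>P. C V) =
          (\<Sum>P\<in>interval_partitions j. \<Prod>V\<in>insert {j..<n} P. C V)"
      by (rule sum.reindex[OF inj, unfolded comp_def])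
    also have "\<dots> = (\<Sum>P\<in>interval_partitions j. (\<Prod>V\<in>P. C V) * C {j..<n})"
      using last_block_notin_interval_partitions j fin by (intro sum.cong refl) (simp add: mult.commute)
    finally show "(\<Sum>P\<in>insert {j..<n} ` interval_partitions j. \<Prod>V\<in>P. C V) =
        (\<Sum>P\<in>interval_partitions j. \<Prod>V\<in>P. C V) * C {j..<n}"
      by (simp add: sum_distrib_right)
  qed
  finally show ?thesis .
qed

section \<open>The Boolean cumulants of \<open>\<phi>\<close> and the cumulants of \<open>\<Psi>\<^sub>t\<close> and \<open>\<Phi>\<^sub>t\<close>\<close>

lemma NC_block_subset: "P \<in> NC n \<Longrightarrow> V \<in> P \<Longrightarrow> V \<subseteq> {..<n}"
  using partition_on_NC by (auto simp: partition_on_def)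

lemma NC_block_nonempty: "P \<in> NC n \<Longrightarrow> V \<in> P \<Longrightarrow> V \<noteq> {}"
  using partition_on_NC by (auto simp: partition_on_def)

lemma finite_NC_partition: "P \<in> NC n \<Longrightarrow> finite P"
  using partition_on_NC finite_elements[of "{..<n}" P] by blast

lemma inner_blocks_subset: "inner_blocks P \<subseteq> P"
  by (auto simp: inner_blocks_def)

lemma NC_singleton_block: "P \<in> NC n - NC_ns n \<Longrightarrow> \<exists>V\<in>P. card V < 2"
  by (auto simp: NC_ns_def not_le)

lemma length_ge_2_cases: "2 \<le> length h \<Longrightarrow> \<exists>b c rest. h = b # c # rest"
  by (cases h; cases "tl h") auto

locale star_probability_space =
  fixes smul :: "complex \<Rightarrow> 'b::ring_1 \<Rightarrow> 'b" and star :: "'b \<Rightarrow> 'b" and phi :: "'b \<Rightarrow> complex"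
  assumes star_prob_space: "star_prob_space smul star phi"
begin

lemma phi_add: "phi (x + y) = phi x + phi y"
  using star_prob_space by (simp add: star_prob_space_def)

lemma phi_smul: "phi (smul c x) = c * phi x"
  using star_prob_space by (simp add: star_prob_space_def)

lemma phi_one: "phi 1 = 1"
  using star_prob_space by (simp add: star_prob_space_def)

lemma mult_smul_right: "x * smul c y = smul c (x * y)"
  using star_prob_space unfolding star_prob_space_def by metis

sublocale module smul
  using star_prob_space by (simp add: star_prob_space_def)

sublocale phi: additive phi
  by standard (rule phi_add)

lemma phi_Lam: "phi (Lam smul phi f g) = 0"
  by (simp add: Lam_def phi.diff phi_smul phi_one)

lemma Wblock_Cons: "2 \<le> length h \<Longrightarrow> Wblock smul phi (a # h) = a * lam_chain smul phi h"
  using length_ge_2_cases by fastforce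

lemma lam_chain_Cons: "2 \<le> length h \<Longrightarrow> lam_chain smul phi (a # h) = Lam smul phi a (lam_chain smul phi h)"
  using length_ge_2_cases by fastforce

lemma phi_lam_chain: "2 \<le> length g \<Longrightarrow> phi (lam_chain smul phi g) = 0"
proof -
  assume "2 \<le> length g"
  then obtain a b rest where g: "g = a # b # rest" using length_ge_2_cases by blast
  then show ?thesis using phi_Lam by (cases rest) simp_all
qed

definition phi_W :: "'b list \<Rightarrow> complex" where
  "phi_W bs = (if length bs < 2 then 0 else phi (Wblock smul phi bs))"

text \<open>Unfolding \<open>\<Lambda>\<close> once: \<open>a \<cdot> \<Lambda>(\<dots>) = \<Lambda>(a, \<dots>) + \<phi>[W(a,\<dots>)] 1\<close>.\<close>

lemma prod_list_lam_chain_expansion: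
  "2 \<le> length g \<Longrightarrow> prod_list g = lam_chain smul phi g +
      (\<Sum>j<length g. smul (phi_W (drop j g)) (prod_list (take j g)))"
proof (induction g)
  case Nil then show ?case by simp
next
  case (Cons a h)
  show ?case
  proof (cases "2 \<le> length h")
    case False
    then obtain b where h: "h = [b]" using Cons.prems
      by (cases h) (auto simp: Suc_le_eq)
    show ?thesis by (simp add: h phi_W_def Lam_def)
  next
    case True
    have IH: "prod_list h = lam_chain smul phi h + (\<Sum>j<length h. smul (phi_W (drop j h)) (prod_list (take j h)))"
      using Cons.IH True by blast
    have L: "lam_chain smul phi (a # h) = a * lam_chain smul phi h - smul (phi (a * lam_chain smul phi h)) 1"
      using lam_chain_Cons[OF True] by (simp add: Lam_def)
    have "\<not> length (a # h) < 2" using True by (cases h) auto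
    then have B: "phi_W (a # h) = phi (a * lam_chain smul phi h)"
      by (simp add: phi_W_def Wblock_Cons[OF True])
    have "prod_list (a # h) = a * lam_chain smul phi h +
        (\<Sum>j<length h. smul (phi_W (drop j h)) (a * prod_list (take j h)))"
      by (simp add: IH distrib_left sum_distrib_left mult_smul_right)
    also have "\<dots> = lam_chain smul phi (a # h) + smul (phi_W (a # h)) 1 +
         (\<Sum>j<length h. smul (phi_W (drop (Suc j) (a # h))) (prod_list (take (Suc j) (a # h))))"
      by (simp add: L B)
    also have "\<dots> = lam_chain smul phi (a # h) +
        (\<Sum>j<length (a # h). smul (phi_W (drop j (a # h))) (prod_list (take j (a # h))))"
      by (simp del: sum.lessThan_Suc add: sum.lessThan_Suc_shift add.assoc)
    finally show ?thesis .
  qed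
qed

lemma phi_prod_list_last_block:
  assumes "bs \<noteq> []" "\<forall>f\<in>set bs. phi f = 0"
  shows "phi (prod_list bs) = (\<Sum>j<length bs. phi (prod_list (take j bs)) * phi_W (drop j bs))"
proof (cases "2 \<le> length bs")
  case False
  then obtain a where bs: "bs = [a]" using assms(1)
    by (cases bs; cases "tl bs") auto
  then show ?thesis using assms(2) by (simp add: phi_W_def)
next
  case True
  have "phi (prod_list bs) = phi (lam_chain smul phi bs) +
      (\<Sum>j<length bs. phi (smul (phi_W (drop j bs)) (prod_list (take j bs))))"
    by (subst prod_list_lam_chain_expansion[OF True]) (simp add: phi_add phi.sum)
  then show ?thesis by (simp add: phi_lam_chain[OF True] phi_smul mult.commute)
qed

lemma nths_take_subset:
  assumes "V \<subseteq> {..<j}"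
  shows "nths (take j xs) V = nths xs V"
proof (cases "j \<le> length xs")
  case False then show ?thesis by simp
next
  case True
  have "nths xs V = nths (take j xs @ drop j xs) V" by simp
  also have "\<dots> = nths (take j xs) V @ nths (drop j xs) {k. k + length (take j xs) \<in> V}"
    by (rule nths_append)
  also have "{k. k + length (take j xs) \<in> V} = {}" using assms True by auto
  finally show ?thesis by simp
qed

lemma nths_atLeastLessThan_length: "nths xs {j..<length xs} = drop j xs"
proof -
  have "nths xs {j..<length xs} = nths xs {i. j \<le> i}"
    unfolding nths_def by (rule arg_cong[where f = "map fst"], rule filter_cong[OF refl])
      (auto dest: set_zip_rightD)
  then show ?thesis by (simp add: drop_eq_nths)
qed

lemma phi_prod_list_interval_sum:
  "bs \<in> lists {f. phi f = 0} \<Longrightarrow>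
   phi (prod_list bs) = (\<Sum>P\<in>interval_partitions (length bs). \<Prod>V\<in>P. phi_W (nths bs V))"
proof (induction "length bs" arbitrary: bs rule: less_induct)
  case less
  show ?case
  proof (cases "bs = []")
    case True then show ?thesis by (simp add: interval_partitions_0 phi_one)
  next
    case False
    have "(\<Sum>P\<in>interval_partitions (length bs). \<Prod>V\<in>P. phi_W (nths bs V)) =
      (\<Sum>j<length bs. (\<Sum>P\<in>interval_partitions j. \<Prod>V\<in>P. phi_W (nths bs V)) * phi_W (nths bs {j..<length bs}))"
      using False by (intro sum_interval_partitions_last_block) simp
    also have "\<dots> = (\<Sum>j<length bs. phi (prod_list (take j bs)) * phi_W (drop j bs))"
    proof (rule sum.cong[OF refl])
      fix j assume j: "j \<in> {..<length bs}"
      have "(\<Sum>P\<in>interval_partitions j. \<Prod>V\<in>P. phi_W (nths bs V)) =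
            (\<Sum>P\<in>interval_partitions j. \<Prod>V\<in>P. phi_W (nths (take j bs) V))"
      proof (intro sum.cong refl prod.cong)
        fix P V assume "P \<in> interval_partitions j" "V \<in> P"
        then have "V \<subseteq> {..<j}" using partition_on_interval_partitions by (auto simp: partition_on_def)
        then show "phi_W (nths bs V) = phi_W (nths (take j bs) V)" by (simp add: nths_take_subset)
      qed
      also have "\<dots> = phi (prod_list (take j bs))"
      proof -
        have "take j bs \<in> lists {f. phi f = 0}" using less.prems by (auto dest: in_set_takeD)
        then show ?thesis using less.hyps[of "take j bs"] j by simp
      qed
      ultimately show "(\<Sum>P\<in>interval_partitions j. \<Prod>V\<in>P. phi_W (nths bs V)) * phi_W (nths bs {j..<length bs}) =
          phi (prod_list (take j bs)) * phi_W (drop j bs)" by (simp add: nths_atLeastLessThan_length)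
    qed
    also have "\<dots> = phi (prod_list bs)" using phi_prod_list_last_block[OF False] less.prems by auto
    finally show ?thesis by simp
  qed
qed

lemma bool_cum_phi:
  "as \<in> lists {f. phi f = 0} \<Longrightarrow> as \<noteq> [] \<Longrightarrow> bool_cum (\<lambda>as. phi (prod_list as)) as = phi_W as"
  by (rule bool_cum_eqI[where A = "{f. phi f = 0}"]) (auto intro: phi_prod_list_interval_sum)

lemma prod_phi_W_not_NC_ns:
  assumes "P \<in> NC (length bs) - NC_ns (length bs)"
  shows "(\<Prod>V\<in>P. phi_W (nths bs V)) = 0"
proof -
  obtain V where V: "V \<in> P" "card V < 2" using NC_singleton_block assms by blast
  moreover have "V \<subseteq> {..<length bs}" using NC_block_subset assms V(1) by blast
  ultimately have "phi_W (nths bs V) = 0" by (simp add: phi_W_def length_nths_subset)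
  then show ?thesis using V(1) finite_NC_partition assms by (auto intro: prod_zero)
qed

lemma prod_phi_W_NC_ns:
  "P \<in> NC_ns (length bs) \<Longrightarrow> (\<Prod>V\<in>P. phi_W (nths bs V)) = (\<Prod>V\<in>P. phi (Wblock smul phi (nths bs V)))"
  using NC_block_subset by (intro prod.cong refl) (auto simp: NC_ns_def phi_W_def length_nths_subset)

lemma sum_NC_eq_sum_NC_ns:
  "(\<Sum>P\<in>NC (length bs). c P * (\<Prod>V\<in>P. phi_W (nths bs V))) =
   (\<Sum>P\<in>NC_ns (length bs). c P * (\<Prod>V\<in>P. phi (Wblock smul phi (nths bs V))))"
proof -
  have "(\<Sum>P\<in>NC (length bs). c P * (\<Prod>V\<in>P. phi_W (nths bs V))) =
        (\<Sum>P\<in>NC_ns (length bs). c P * (\<Prod>V\<in>P. phi_W (nths bs V)))"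
    by (rule sum.mono_neutral_right[OF finite_NC]) (auto simp: NC_ns_def prod_phi_W_not_NC_ns)
  then show ?thesis by (simp add: prod_phi_W_NC_ns)
qed

lemma prod_inner_outer_blocks:
  "finite P \<Longrightarrow> (\<Prod>V\<in>inner_blocks P. f V) * (\<Prod>V\<in>outer_blocks P. f V) = (\<Prod>V\<in>P. f V)"
  unfolding outer_blocks_def using prod.subset_diff[OF inner_blocks_subset, of P f]
  by (simp add: mult.commute)

lemma Psi_t_NC_sum:
  "bs \<noteq> [] \<Longrightarrow> Psi_t smul phi t bs = (\<Sum>P\<in>NC (length bs). \<Prod>V\<in>P. of_real t * phi_W (nths bs V))"
  using sum_NC_eq_sum_NC_ns[where bs = bs and c = "\<lambda>P. of_real t ^ card P"]
  by (simp add: Psi_t_def prod.distrib)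

lemma Phi_t_NC_sum:
  assumes "bs \<noteq> []"
  shows "Phi_t smul phi t bs = (\<Sum>P\<in>NC (length bs).
     (\<Prod>V\<in>inner_blocks P. of_real t * phi_W (nths bs V)) *
     (\<Prod>U\<in>outer_blocks P. of_real (1 + t) * phi_W (nths bs U)))"
proof -
  have "(\<Prod>V\<in>inner_blocks P. of_real t * phi_W (nths bs V)) *
        (\<Prod>U\<in>outer_blocks P. of_real (1 + t) * phi_W (nths bs U)) =
        of_real (1 + t) ^ card (outer_blocks P) * of_real t ^ card (inner_blocks P) *
        (\<Prod>V\<in>P. phi_W (nths bs V))" if "P \<in> NC (length bs)" for P
    using prod_inner_outer_blocks[OF finite_NC_partition[OF that], of "\<lambda>V. phi_W (nths bs V)"]
    by (simp add: prod.distrib mult_ac)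
  then show ?thesis
    using sum_NC_eq_sum_NC_ns[where bs = bs and
        c = "\<lambda>P. of_real (1 + t) ^ card (outer_blocks P) * of_real t ^ card (inner_blocks P)"]
      assms by (simp add: Phi_t_def cong: sum.cong)
qed

lemma free_cum_Psi_t:
  "as \<in> lists {f. phi f = 0} \<Longrightarrow> as \<noteq> [] \<Longrightarrow> free_cum (Psi_t smul phi t) as = of_real t * phi_W as"
  by (rule free_cum_eqI[where A = "{f. phi f = 0}"]) (auto intro: Psi_t_NC_sum)

lemma cfree_cum_Phi_t:
  assumes "as \<in> lists {f. phi f = 0}" "as \<noteq> []"
  shows "cfree_cum (Phi_t smul phi t) (Psi_t smul phi t) as = of_real (1 + t) * phi_W as"
proof (rule cfree_cum_eqI[where A = "{f. phi f = 0}", OF assms])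
  fix bs assume bs: "bs \<in> lists {f. phi f = 0}" "bs \<noteq> []"
  have "free_cum (Psi_t smul phi t) (nths bs V) = of_real t * phi_W (nths bs V)"
    if "P \<in> NC (length bs)" "V \<in> inner_blocks P" for P V
    using that inner_blocks_subset NC_block_subset NC_block_nonempty
    by (intro free_cum_Psi_t nths_in_lists[OF bs(1)] nths_nonempty) blast+
  then show "Phi_t smul phi t bs = (\<Sum>P\<in>NC (length bs).
      (\<Prod>V\<in>inner_blocks P. free_cum (Psi_t smul phi t) (nths bs V)) *
      (\<Prod>U\<in>outer_blocks P. of_real (1 + t) * phi_W (nths bs U)))"
    unfolding Phi_t_NC_sum[OF bs(2)] by (auto intro!: sum.cong prod.cong)
qed

end

section \<open>Block sums\<close>

type_synonym set_weight = "nat set \<Rightarrow> complex"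

lemma card_below_less: "finite (S::nat set) \<Longrightarrow> y \<in> S \<Longrightarrow> card (S \<inter> {..<y}) < card S"
  by (rule psubset_card_mono) auto

text \<open>\<open>block_sum g G T B S\<close>, for \<open>S\<close> below \<open>B\<close>, sums over the extensions \<open>B \<union> U\<close>
  (\<open>U \<subseteq> S\<close>) of a top block: \<open>g\<close> weighs the block, \<open>G\<close> each gap of \<open>S\<close> inside it and \<open>T\<close> the part
  of \<open>S\<close> below it (see \<open>block_sum_explicit\<close>). With \<open>G = nc_sum g\<^sub>1\<close> and \<open>T\<close> the noncrossing
  sum itself this is the decomposition of a noncrossing partition at the block of its last point.\<close>

function block_sum :: "set_weight \<Rightarrow> set_weight \<Rightarrow> set_weight \<Rightarrow> nat set \<Rightarrow> nat set \<Rightarrow> complex" where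
  "block_sum g G T B S = (if finite S then g B * T S +
     (\<Sum>y\<in>S. G (S \<inter> {y<..}) * block_sum g G T (insert y B) (S \<inter> {..<y})) else 0)"
  by auto
termination
  by (relation "measure (\<lambda>(g, G, T, B, S). card S)") (auto intro: card_below_less)

declare block_sum.simps [simp del]

lemma block_sum_rec:
  "finite S \<Longrightarrow> block_sum g G T B S =
     g B * T S + (\<Sum>y\<in>S. G (S \<inter> {y<..}) * block_sum g G T (insert y B) (S \<inter> {..<y}))"
  by (subst block_sum.simps) simp

lemma block_sum_empty: "block_sum g G T B {} = g B * T {}"
  by (simp add: block_sum_rec)

lemma block_sum_cong:
  assumes "finite S"
    and "\<And>X. X \<subseteq> S \<Longrightarrow> G X = G' X" "\<And>X. X \<subseteq> S \<Longrightarrow> T X = T' X"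
    and "\<And>X. X \<subseteq> S \<Longrightarrow> g (B \<union> X) = g' (B \<union> X)"
  shows "block_sum g G T B S = block_sum g' G' T' B S"
  using assms
proof (induction "card S" arbitrary: S B rule: less_induct)
  case less
  have "block_sum g G T (insert y B) (S \<inter> {..<y}) = block_sum g' G' T' (insert y B) (S \<inter> {..<y})"
    if y: "y \<in> S" for y
  proof (rule less.hyps)
    show "card (S \<inter> {..<y}) < card S" using card_below_less less.prems(1) y by blast
    show "g (insert y B \<union> X) = g' (insert y B \<union> X)" if "X \<subseteq> S \<inter> {..<y}" for X
      using less.prems(4)[of "insert y X"] that y by auto
  qed (use less.prems in auto)
  moreover have "g B = g' B" using less.prems(4)[of "{}"] by simp
  ultimately show ?case
    using less.prems(2,3) by (simp add: block_sum_rec[OF less.prems(1)] cong: sum.cong)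
qed

lemma block_sum_scale:
  assumes "finite S"
  shows "block_sum (\<lambda>V. c * g V) G T B S = c * block_sum g G T B S"
  using assms
proof (induction "card S" arbitrary: S B rule: less_induct)
  case less
  have "block_sum (\<lambda>V. c * g V) G T (insert y B) (S \<inter> {..<y}) = c * block_sum g G T (insert y B) (S \<inter> {..<y})"
    if "y \<in> S" for y
    using less.hyps card_below_less[OF less.prems that] less.prems by simp
  then show ?case
    by (simp add: block_sum_rec[OF less.prems] sum_distrib_left algebra_simps cong: sum.cong)
qed

lemma block_sum_diff:
  assumes "finite S"
  shows "block_sum g G (\<lambda>X. T1 X - T2 X) B S = block_sum g G T1 B S - block_sum g G T2 B S"
  using assms
proof (induction "card S" arbitrary: S B rule: less_induct)
  case less
  have "block_sum g G (\<lambda>X. T1 X - T2 X) (insert y B) (S \<inter> {..<y}) =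
        block_sum g G T1 (insert y B) (S \<inter> {..<y}) - block_sum g G T2 (insert y B) (S \<inter> {..<y})"
    if "y \<in> S" for y
    using less.hyps card_below_less[OF less.prems that] less.prems by simp
  then have "(\<Sum>y\<in>S. G (S \<inter> {y<..}) * block_sum g G (\<lambda>X. T1 X - T2 X) (insert y B) (S \<inter> {..<y})) =
    (\<Sum>y\<in>S. G (S \<inter> {y<..}) * block_sum g G T1 (insert y B) (S \<inter> {..<y}) -
               G (S \<inter> {y<..}) * block_sum g G T2 (insert y B) (S \<inter> {..<y}))"
    by (intro sum.cong refl) (simp add: right_diff_distrib)
  then show ?case
    unfolding block_sum_rec[OF less.prems, of g G] by (simp add: sum_subtractf algebra_simps)
qed

definition delta_empty :: set_weight where
  "delta_empty X = (if X = {} then 1 else 0)"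

lemma above_Max_empty_iff: "finite U \<Longrightarrow> y \<in> U \<Longrightarrow> U \<inter> {y<..} = {} \<longleftrightarrow> y = Max U"
proof
  assume a: "finite U" "y \<in> U" "U \<inter> {y<..} = {}"
  then have "\<forall>x\<in>U. x \<le> y" by (auto simp: not_less[symmetric])
  then show "y = Max U" using a by (intro Max_eqI[symmetric]) auto
next
  assume a: "finite U" "y \<in> U" "y = Max U"
  then show "U \<inter> {y<..} = {}" using Max_ge[OF a(1)] by (auto simp: not_less[symmetric])
qed

lemma sum_delta_above:
  assumes "finite U" "U \<noteq> {}"
  shows "(\<Sum>y\<in>U. delta_empty (U \<inter> {y<..}) * f y) = f (Max U)"
proof -
  have "(\<Sum>y\<in>U. delta_empty (U \<inter> {y<..}) * f y) = delta_empty (U \<inter> {Max U<..}) * f (Max U) +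
        (\<Sum>y\<in>U - {Max U}. delta_empty (U \<inter> {y<..}) * f y)"
    by (rule sum.remove[OF assms(1) Max_in[OF assms]])
  also have "(\<Sum>y\<in>U - {Max U}. delta_empty (U \<inter> {y<..}) * f y) = 0"
    using assms above_Max_empty_iff[OF assms(1)] by (intro sum.neutral) (auto simp: delta_empty_def)
  also have "delta_empty (U \<inter> {Max U<..}) = 1"
    using assms above_Max_empty_iff[OF assms(1), of "Max U"] by (simp add: delta_empty_def)
  finally show ?thesis by simp
qed

lemma block_sum_delta_empty:
  assumes "finite U"
  shows "block_sum g delta_empty delta_empty B U = g (B \<union> U)"
  using assms
proof (induction "card U" arbitrary: U B rule: less_induct)
  case less
  show ?case
  proof (cases "U = {}")
    case True then show ?thesis by (simp add: block_sum_empty delta_empty_def)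
  next
    case False
    have M: "Max U \<in> U" using False less.prems by simp
    have "block_sum g delta_empty delta_empty B U =
        (\<Sum>y\<in>U. delta_empty (U \<inter> {y<..}) * block_sum g delta_empty delta_empty (insert y B) (U \<inter> {..<y}))"
      using False by (simp add: block_sum_rec[OF less.prems] delta_empty_def)
    also have "\<dots> = block_sum g delta_empty delta_empty (insert (Max U) B) (U \<inter> {..<Max U})"
      by (rule sum_delta_above[OF less.prems False])
    also have "\<dots> = g (insert (Max U) B \<union> (U \<inter> {..<Max U}))"
      using less.hyps card_below_less[OF less.prems M] less.prems by simp
    also have "insert (Max U) B \<union> (U \<inter> {..<Max U}) = B \<union> U"
      using M less.prems by (auto simp: less_le)
    finally show ?thesis .
  qed
qed

function gap_prod :: "set_weight \<Rightarrow> set_weight \<Rightarrow> nat set \<Rightarrow> nat set \<Rightarrow> complex" where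
  "gap_prod G T U S = (if U = {} \<or> infinite U then T S else
     G (S \<inter> {Max U<..}) * gap_prod G T (U - {Max U}) (S \<inter> {..<Max U}))"
  by auto
termination
  by (relation "measure (\<lambda>(G, T, U, S). card U)") (auto simp: card_gt_0_iff)

declare gap_prod.simps [simp del]

lemma gap_prod_empty: "gap_prod G T {} S = T S"
  by (subst gap_prod.simps) simp

lemma gap_prod_Max:
  "finite U \<Longrightarrow> U \<noteq> {} \<Longrightarrow>
   gap_prod G T U S = G (S \<inter> {Max U<..}) * gap_prod G T (U - {Max U}) (S \<inter> {..<Max U})"
  by (subst gap_prod.simps) simp

lemma gap_prod_split:
  assumes "finite U" "y \<in> U"
  shows "gap_prod G T U S = gap_prod G G (U \<inter> {y<..}) (S \<inter> {y<..}) * gap_prod G T (U \<inter> {..<y}) (S \<inter> {..<y})"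
  using assms
proof (induction "card U" arbitrary: U S rule: less_induct)
  case less
  have ne: "U \<noteq> {}" using less.prems by auto
  define m where "m = Max U"
  have mU: "m \<in> U" using Max_in[OF less.prems(1) ne] m_def by simp
  have ym: "y \<le> m" using Max_ge[OF less.prems] m_def by simp
  show ?case
  proof (cases "y = m")
    case True
    have e: "U \<inter> {y<..} = {}" using above_Max_empty_iff[OF less.prems] True m_def by simp
    have "U - {Max U} = U \<inter> {..<y}" using True m_def ym Max_ge[OF less.prems(1)]
      by (auto simp: less_le)
    then show ?thesis using gap_prod_Max[OF less.prems(1) ne] e True m_def by (simp add: gap_prod_empty)
  next
    case False
    then have ym': "y < m" using ym by simp
    have yU': "y \<in> U - {m}" using less.prems False by simp
    have cU': "card (U - {m}) < card U" by (rule card_Diff1_less[OF less.prems(1) mU])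
    have IH: "gap_prod G T (U - {m}) (S \<inter> {..<m}) =
       gap_prod G G ((U - {m}) \<inter> {y<..}) ((S \<inter> {..<m}) \<inter> {y<..}) *
       gap_prod G T ((U - {m}) \<inter> {..<y}) ((S \<inter> {..<m}) \<inter> {..<y})"
      using less.hyps[OF cU'] less.prems(1) yU' by simp
    have ne1: "U \<inter> {y<..} \<noteq> {}" using mU ym' by auto
    have f1: "finite (U \<inter> {y<..})" using less.prems(1) by simp
    have M1: "Max (U \<inter> {y<..}) = m"
      using mU ym' Max_ge[OF less.prems(1)] m_def less.prems(1) by (intro Max_eqI) auto
    have "gap_prod G G (U \<inter> {y<..}) (S \<inter> {y<..}) =
        G ((S \<inter> {y<..}) \<inter> {m<..}) * gap_prod G G ((U \<inter> {y<..}) - {m}) ((S \<inter> {y<..}) \<inter> {..<m})"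
      using gap_prod_Max[OF f1 ne1] M1 by simp
    moreover have "(S \<inter> {y<..}) \<inter> {m<..} = S \<inter> {m<..}" using ym' by auto
    moreover have "(U \<inter> {y<..}) - {m} = (U - {m}) \<inter> {y<..}" by auto
    moreover have "(S \<inter> {y<..}) \<inter> {..<m} = (S \<inter> {..<m}) \<inter> {y<..}" by auto
    moreover have "(U - {m}) \<inter> {..<y} = U \<inter> {..<y}" using ym' by auto
    moreover have "(S \<inter> {..<m}) \<inter> {..<y} = S \<inter> {..<y}" using ym' by auto
    ultimately show ?thesis
      using gap_prod_Max[OF less.prems(1) ne] IH m_def by (simp add: mult.assoc)
  qed
qed

definition gap_sum :: "set_weight \<Rightarrow> set_weight \<Rightarrow> set_weight \<Rightarrow> nat set \<Rightarrow> complex" where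
  "gap_sum F G T S = (\<Sum>U\<in>Pow S. F U * gap_prod G T U S)"

lemma gap_sum_delta_empty:
  assumes "finite S"
  shows "gap_sum delta_empty G T S = T S"
proof -
  have "gap_sum delta_empty G T S = delta_empty {} * gap_prod G T {} S + (\<Sum>U\<in>Pow S - {{}}. delta_empty U * gap_prod G T U S)"
    unfolding gap_sum_def using assms by (intro sum.remove) auto
  also have "(\<Sum>U\<in>Pow S - {{}}. delta_empty U * gap_prod G T U S) = 0"
    by (intro sum.neutral) (auto simp: delta_empty_def)
  moreover have "delta_empty {} = 1" by (simp add: delta_empty_def)
  ultimately show ?thesis by (simp add: gap_prod_empty)
qed

lemma bij_betw_Pow_split_at:
  fixes S :: "nat set"
  assumes "y \<in> S"
  shows "bij_betw (\<lambda>p. fst p \<union> insert y (snd p)) (Pow (S \<inter> {y<..}) \<times> Pow (S \<inter> {..<y})) {U\<in>Pow S. y \<in> U}"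
  unfolding bij_betw_def
proof
  let ?h = "\<lambda>p. fst p \<union> insert y (snd p)"
  show "inj_on ?h (Pow (S \<inter> {y<..}) \<times> Pow (S \<inter> {..<y}))"
  proof (rule inj_onI)
    fix p q assume p: "p \<in> Pow (S \<inter> {y<..}) \<times> Pow (S \<inter> {..<y})"
      and q: "q \<in> Pow (S \<inter> {y<..}) \<times> Pow (S \<inter> {..<y})" and e: "?h p = ?h q"
    have "fst p = ?h p \<inter> {y<..}" using p by auto
    also have "\<dots> = ?h q \<inter> {y<..}" by (simp only: e)
    also have "\<dots> = fst q" using q by auto
    finally have "fst p = fst q" .
    have "snd p = ?h p \<inter> {..<y}" using p by auto
    also have "\<dots> = ?h q \<inter> {..<y}" by (simp only: e)
    also have "\<dots> = snd q" using q by auto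
    finally show "p = q" using \<open>fst p = fst q\<close> by (simp add: prod_eq_iff)
  qed
  show "?h ` (Pow (S \<inter> {y<..}) \<times> Pow (S \<inter> {..<y})) = {U\<in>Pow S. y \<in> U}"
  proof
    show "{U\<in>Pow S. y \<in> U} \<subseteq> ?h ` (Pow (S \<inter> {y<..}) \<times> Pow (S \<inter> {..<y}))"
    proof
      fix U assume U: "U \<in> {U\<in>Pow S. y \<in> U}"
      have "U = ?h (U \<inter> {y<..}, U \<inter> {..<y})" using U by auto
      moreover have "(U \<inter> {y<..}, U \<inter> {..<y}) \<in> Pow (S \<inter> {y<..}) \<times> Pow (S \<inter> {..<y})" using U by auto
      ultimately show "U \<in> ?h ` (Pow (S \<inter> {y<..}) \<times> Pow (S \<inter> {..<y}))" by blast
    qed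
  qed (use assms in auto)
qed

lemma sum_Pow_split_at:
  fixes S :: "nat set"
  assumes "finite S"
  shows "(\<Sum>U\<in>Pow S. \<Sum>y\<in>U. f U y) =
         (\<Sum>y\<in>S. \<Sum>U1\<in>Pow (S \<inter> {y<..}). \<Sum>U2\<in>Pow (S \<inter> {..<y}). f (U1 \<union> insert y U2) y)"
proof -
  have "(\<Sum>U\<in>Pow S. \<Sum>y\<in>U. f U y) = (\<Sum>U\<in>Pow S. \<Sum>y\<in>{y\<in>S. y \<in> U}. f U y)"
    by (intro sum.cong refl) auto
  also have "\<dots> = (\<Sum>y\<in>S. \<Sum>U\<in>{U\<in>Pow S. y \<in> U}. f U y)"
    using assms by (intro sum.swap_restrict) auto
  also have "\<dots> = (\<Sum>y\<in>S. \<Sum>p\<in>Pow (S \<inter> {y<..}) \<times> Pow (S \<inter> {..<y}). f (fst p \<union> insert y (snd p)) y)"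
    by (intro sum.cong refl sum.reindex_bij_betw[symmetric] bij_betw_Pow_split_at)
  finally show ?thesis by (simp add: sum.cartesian_product split_beta)
qed

lemma block_sum_gap_sum:
  assumes "finite S"
  shows "(\<Sum>U\<in>Pow S. block_sum g A T0 B U * gap_prod G T U S) = block_sum g (gap_sum A G G) (gap_sum T0 G T) B S"
  using assms
proof (induction "card S" arbitrary: S B rule: less_induct)
  case less
  have fS: "finite S" by (rule less.prems)
  have finU: "U \<in> Pow S \<Longrightarrow> finite U" for U using fS finite_subset by blast
  have "(\<Sum>U\<in>Pow S. block_sum g A T0 B U * gap_prod G T U S) =
        (\<Sum>U\<in>Pow S. g B * (T0 U * gap_prod G T U S) +
           (\<Sum>y\<in>U. A (U \<inter> {y<..}) * block_sum g A T0 (insert y B) (U \<inter> {..<y}) * gap_prod G T U S))"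
    by (intro sum.cong refl) (simp add: block_sum_rec[OF finU] distrib_right sum_distrib_right mult.assoc)
  also have "\<dots> = g B * gap_sum T0 G T S +
        (\<Sum>U\<in>Pow S. \<Sum>y\<in>U. A (U \<inter> {y<..}) * block_sum g A T0 (insert y B) (U \<inter> {..<y}) * gap_prod G T U S)"
    by (simp add: sum.distrib gap_sum_def sum_distrib_left)
  also have "(\<Sum>U\<in>Pow S. \<Sum>y\<in>U. A (U \<inter> {y<..}) * block_sum g A T0 (insert y B) (U \<inter> {..<y}) * gap_prod G T U S) =
     (\<Sum>y\<in>S. \<Sum>U1\<in>Pow (S \<inter> {y<..}). \<Sum>U2\<in>Pow (S \<inter> {..<y}).
        A ((U1 \<union> insert y U2) \<inter> {y<..}) * block_sum g A T0 (insert y B) ((U1 \<union> insert y U2) \<inter> {..<y}) *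
        gap_prod G T (U1 \<union> insert y U2) S)"
    by (rule sum_Pow_split_at[OF fS, of "\<lambda>U y. A (U \<inter> {y<..}) * block_sum g A T0 (insert y B) (U \<inter> {..<y}) * gap_prod G T U S"])
  also have "\<dots> = (\<Sum>y\<in>S. \<Sum>U1\<in>Pow (S \<inter> {y<..}). \<Sum>U2\<in>Pow (S \<inter> {..<y}).
        (A U1 * gap_prod G G U1 (S \<inter> {y<..})) * (block_sum g A T0 (insert y B) U2 * gap_prod G T U2 (S \<inter> {..<y})))"
  proof (intro sum.cong refl)
    fix y U1 U2 assume y: "y \<in> S" and U1: "U1 \<in> Pow (S \<inter> {y<..})" and U2: "U2 \<in> Pow (S \<inter> {..<y})"
    let ?U = "U1 \<union> insert y U2"
    have a: "?U \<inter> {y<..} = U1" "?U \<inter> {..<y} = U2" using U1 U2 by auto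
    have "finite ?U" using U1 U2 fS finite_subset by auto
    then have "gap_prod G T ?U S = gap_prod G G U1 (S \<inter> {y<..}) * gap_prod G T U2 (S \<inter> {..<y})"
      using gap_prod_split[of ?U y G T S] a by simp
    then show "A (?U \<inter> {y<..}) * block_sum g A T0 (insert y B) (?U \<inter> {..<y}) * gap_prod G T ?U S =
        (A U1 * gap_prod G G U1 (S \<inter> {y<..})) * (block_sum g A T0 (insert y B) U2 * gap_prod G T U2 (S \<inter> {..<y}))"
      using a by (simp add: mult_ac)
  qed
  also have "\<dots> = (\<Sum>y\<in>S. gap_sum A G G (S \<inter> {y<..}) * block_sum g (gap_sum A G G) (gap_sum T0 G T) (insert y B) (S \<inter> {..<y}))"
  proof (rule sum.cong[OF refl])
    fix y assume y: "y \<in> S"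
    have IH: "(\<Sum>U\<in>Pow (S \<inter> {..<y}). block_sum g A T0 (insert y B) U * gap_prod G T U (S \<inter> {..<y})) =
        block_sum g (gap_sum A G G) (gap_sum T0 G T) (insert y B) (S \<inter> {..<y})"
      using less.hyps[OF card_below_less[OF fS y]] fS by simp
    show "(\<Sum>U1\<in>Pow (S \<inter> {y<..}). \<Sum>U2\<in>Pow (S \<inter> {..<y}).
        (A U1 * gap_prod G G U1 (S \<inter> {y<..})) * (block_sum g A T0 (insert y B) U2 * gap_prod G T U2 (S \<inter> {..<y}))) =
        gap_sum A G G (S \<inter> {y<..}) * block_sum g (gap_sum A G G) (gap_sum T0 G T) (insert y B) (S \<inter> {..<y})"
      unfolding IH[symmetric] gap_sum_def by (simp add: sum_product)
  qed
  finally show ?case by (simp add: block_sum_rec[OF fS])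
qed

lemma block_sum_explicit:
  assumes "finite S"
  shows "block_sum g G T B S = (\<Sum>U\<in>Pow S. g (B \<union> U) * gap_prod G T U S)"
proof -
  have "(\<Sum>U\<in>Pow S. g (B \<union> U) * gap_prod G T U S) = (\<Sum>U\<in>Pow S. block_sum g delta_empty delta_empty B U * gap_prod G T U S)"
    using assms by (intro sum.cong refl) (simp add: block_sum_delta_empty finite_subset)
  also have "\<dots> = block_sum g (gap_sum delta_empty G G) (gap_sum delta_empty G T) B S" by (rule block_sum_gap_sum[OF assms])
  also have "\<dots> = block_sum g G T B S"
    using assms by (intro block_sum_cong) (auto simp: gap_sum_delta_empty finite_subset)
  finally show ?thesis by simp
qed

text \<open>The tail weight \<open>delta_empty\<close> forces the block of \<open>Max K\<close> to contain \<open>Min K\<close>: with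
  \<open>G = nc_sum h\<close> this is the sum over the irreducible noncrossing partitions of \<open>K\<close>, the outer
  block weighted by \<open>g\<close>, the inner ones by \<open>h\<close>.\<close>

definition irreducible_sum :: "set_weight \<Rightarrow> set_weight \<Rightarrow> nat set \<Rightarrow> complex" where
  "irreducible_sum g G K = block_sum g G delta_empty {Max K} (K - {Max K})"

lemma block_sum_irreducible_sum:
  assumes "finite S" "\<forall>x\<in>S. x < m"
  shows "block_sum (irreducible_sum r A) G T {m} S = block_sum r (gap_sum A G G) T {m} S"
proof -
  have "block_sum (irreducible_sum r A) G T {m} S = (\<Sum>U\<in>Pow S. irreducible_sum r A ({m} \<union> U) * gap_prod G T U S)"
    by (rule block_sum_explicit[OF assms(1)])
  also have "\<dots> = (\<Sum>U\<in>Pow S. block_sum r A delta_empty {m} U * gap_prod G T U S)"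
  proof (intro sum.cong refl)
    fix U assume U: "U \<in> Pow S"
    have f: "finite ({m} \<union> U)" using U assms(1) finite_subset by auto
    have M: "Max (insert m U) = m" using U assms(2) f by (intro Max_eqI) (auto simp: less_imp_le subset_iff)
    have "insert m U - {m} = U" using U assms(2) by auto
    then show "irreducible_sum r A ({m} \<union> U) * gap_prod G T U S = block_sum r A delta_empty {m} U * gap_prod G T U S"
      by (simp add: irreducible_sum_def M)
  qed
  also have "\<dots> = block_sum r (gap_sum A G G) (gap_sum delta_empty G T) {m} S" by (rule block_sum_gap_sum[OF assms(1)])
  also have "\<dots> = block_sum r (gap_sum A G G) T {m} S"
    using assms by (intro block_sum_cong) (auto simp: gap_sum_delta_empty finite_subset)
  finally show ?thesis .
qed

lemma block_sum_Int_greaterThan: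
  assumes "finite S"
  shows "block_sum g G P B (S \<inter> {y<..}) = g B * P (S \<inter> {y<..}) +
    (\<Sum>z\<in>{z\<in>S. y < z}. G (S \<inter> {z<..}) * block_sum g G P (insert z B) (S \<inter> {y<..} \<inter> {..<z}))"
proof -
  have "block_sum g G P B (S \<inter> {y<..}) = g B * P (S \<inter> {y<..}) +
    (\<Sum>z\<in>S \<inter> {y<..}. G (S \<inter> {y<..} \<inter> {z<..}) * block_sum g G P (insert z B) (S \<inter> {y<..} \<inter> {..<z}))"
    by (rule block_sum_rec) (use assms in simp)
  also have "(\<Sum>z\<in>S \<inter> {y<..}. G (S \<inter> {y<..} \<inter> {z<..}) * block_sum g G P (insert z B) (S \<inter> {y<..} \<inter> {..<z})) =
     (\<Sum>z\<in>{z\<in>S. y < z}. G (S \<inter> {z<..}) * block_sum g G P (insert z B) (S \<inter> {y<..} \<inter> {..<z}))"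
  proof (rule sum.cong)
    fix z assume "z \<in> {z\<in>S. y < z}"
    then have "S \<inter> {y<..} \<inter> {z<..} = S \<inter> {z<..}" by auto
    then show "G (S \<inter> {y<..} \<inter> {z<..}) * block_sum g G P (insert z B) (S \<inter> {y<..} \<inter> {..<z}) =
      G (S \<inter> {z<..}) * block_sum g G P (insert z B) (S \<inter> {y<..} \<inter> {..<z})" by simp
  qed auto
  finally show ?thesis .
qed

lemma block_sum_delta_empty_Int_atLeast:
  assumes "finite S" "w \<in> S"
  shows "block_sum g G delta_empty B (S \<inter> {w..}) = G (S \<inter> {w<..}) * g (insert w B) +
    (\<Sum>z\<in>{z\<in>S. w < z}. G (S \<inter> {z<..}) * block_sum g G delta_empty (insert z B) (S \<inter> {w..} \<inter> {..<z}))"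
proof -
  have fw: "finite (S \<inter> {w..})" using assms(1) by simp
  have ww: "w \<in> S \<inter> {w..}" using assms(2) by simp
  have "delta_empty (S \<inter> {w..}) = 0" using ww by (auto simp: delta_empty_def)
  then have "block_sum g G delta_empty B (S \<inter> {w..}) =
      (\<Sum>z\<in>S \<inter> {w..}. G (S \<inter> {w..} \<inter> {z<..}) * block_sum g G delta_empty (insert z B) (S \<inter> {w..} \<inter> {..<z}))"
    by (simp add: block_sum_rec[OF fw])
  also have "\<dots> = G (S \<inter> {w..} \<inter> {w<..}) * block_sum g G delta_empty (insert w B) (S \<inter> {w..} \<inter> {..<w}) +
     (\<Sum>z\<in>(S \<inter> {w..}) - {w}. G (S \<inter> {w..} \<inter> {z<..}) * block_sum g G delta_empty (insert z B) (S \<inter> {w..} \<inter> {..<z}))"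
    by (rule sum.remove[OF fw ww])
  also have "S \<inter> {w..} \<inter> {..<w} = {}" by auto
  also have "S \<inter> {w..} \<inter> {w<..} = S \<inter> {w<..}" by auto
  also have "(S \<inter> {w..}) - {w} = {z\<in>S. w < z}" by auto
  also have "(\<Sum>z\<in>{z\<in>S. w < z}. G (S \<inter> {w..} \<inter> {z<..}) * block_sum g G delta_empty (insert z B) (S \<inter> {w..} \<inter> {..<z})) =
      (\<Sum>z\<in>{z\<in>S. w < z}. G (S \<inter> {z<..}) * block_sum g G delta_empty (insert z B) (S \<inter> {w..} \<inter> {..<z}))"
    by (intro sum.cong refl) (auto intro!: arg_cong[where f=G])
  moreover have "delta_empty {} = 1" by (simp add: delta_empty_def)
  ultimately show ?thesis by (simp add: block_sum_empty)
qed

lemma block_sum_tail_split: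
  assumes "finite S"
    and "\<And>I. I \<subseteq> S \<Longrightarrow> T I = (\<Sum>y\<in>I. P (I \<inter> {y<..}) * Q (I \<inter> {..y}))"
  shows "block_sum g G T B S = (\<Sum>y\<in>S. Q (S \<inter> {..y}) * block_sum g G P B (S \<inter> {y<..}))"
  using assms
proof (induction "card S" arbitrary: S B rule: less_induct)
  case less
  have fS: "finite S" by (rule less.prems(1))
  have IH: "block_sum g G T (insert z B) (S \<inter> {..<z}) =
     (\<Sum>y\<in>{y\<in>S. y < z}. Q (S \<inter> {..y}) * block_sum g G P (insert z B) (S \<inter> {y<..} \<inter> {..<z}))"
    if z: "z \<in> S" for z
  proof -
    have "block_sum g G T (insert z B) (S \<inter> {..<z}) =
      (\<Sum>y\<in>S \<inter> {..<z}. Q (S \<inter> {..<z} \<inter> {..y}) * block_sum g G P (insert z B) (S \<inter> {..<z} \<inter> {y<..}))"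
      using less.hyps[OF card_below_less[OF fS z]] fS less.prems(2) by auto
    also have "\<dots> = (\<Sum>y\<in>{y\<in>S. y < z}. Q (S \<inter> {..y}) * block_sum g G P (insert z B) (S \<inter> {y<..} \<inter> {..<z}))"
    proof (rule sum.cong)
      show "S \<inter> {..<z} = {y\<in>S. y < z}" by auto
      fix y assume "y \<in> {y\<in>S. y < z}"
      then have "S \<inter> {..<z} \<inter> {..y} = S \<inter> {..y}" "S \<inter> {..<z} \<inter> {y<..} = S \<inter> {y<..} \<inter> {..<z}" by auto
      then show "Q (S \<inter> {..<z} \<inter> {..y}) * block_sum g G P (insert z B) (S \<inter> {..<z} \<inter> {y<..}) =
            Q (S \<inter> {..y}) * block_sum g G P (insert z B) (S \<inter> {y<..} \<inter> {..<z})" by simp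
    qed
    finally show ?thesis .
  qed
  have "block_sum g G T B S = g B * T S + (\<Sum>z\<in>S. G (S \<inter> {z<..}) * block_sum g G T (insert z B) (S \<inter> {..<z}))"
    by (rule block_sum_rec[OF fS])
  also have "(\<Sum>z\<in>S. G (S \<inter> {z<..}) * block_sum g G T (insert z B) (S \<inter> {..<z})) =
     (\<Sum>z\<in>S. \<Sum>y\<in>{y\<in>S. y < z}. Q (S \<inter> {..y}) * (G (S \<inter> {z<..}) * block_sum g G P (insert z B) (S \<inter> {y<..} \<inter> {..<z})))"
    using IH by (simp add: sum_distrib_left mult_ac)
  also have "\<dots> = (\<Sum>y\<in>S. \<Sum>z\<in>{z\<in>S. y < z}. Q (S \<inter> {..y}) * (G (S \<inter> {z<..}) * block_sum g G P (insert z B) (S \<inter> {y<..} \<inter> {..<z})))"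
    using fS by (rule sum.swap_restrict[OF _ fS])
  also have "T S = (\<Sum>y\<in>S. P (S \<inter> {y<..}) * Q (S \<inter> {..y}))" using less.prems(2) by simp
  finally have L: "block_sum g G T B S = g B * (\<Sum>y\<in>S. P (S \<inter> {y<..}) * Q (S \<inter> {..y})) +
     (\<Sum>y\<in>S. \<Sum>z\<in>{z\<in>S. y < z}. Q (S \<inter> {..y}) * (G (S \<inter> {z<..}) * block_sum g G P (insert z B) (S \<inter> {y<..} \<inter> {..<z})))" .
  have R: "Q (S \<inter> {..y}) * block_sum g G P B (S \<inter> {y<..}) = g B * (P (S \<inter> {y<..}) * Q (S \<inter> {..y})) +
      (\<Sum>z\<in>{z\<in>S. y < z}. Q (S \<inter> {..y}) * (G (S \<inter> {z<..}) * block_sum g G P (insert z B) (S \<inter> {y<..} \<inter> {..<z})))"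
    for y using block_sum_Int_greaterThan[OF fS, of g G P B y] by (simp add: algebra_simps sum_distrib_left)
  have "(\<Sum>y\<in>S. Q (S \<inter> {..y}) * block_sum g G P B (S \<inter> {y<..})) =
     (\<Sum>y\<in>S. g B * (P (S \<inter> {y<..}) * Q (S \<inter> {..y})) +
      (\<Sum>z\<in>{z\<in>S. y < z}. Q (S \<inter> {..y}) * (G (S \<inter> {z<..}) * block_sum g G P (insert z B) (S \<inter> {y<..} \<inter> {..<z}))))"
    by (rule sum.cong[OF refl]) (rule R)
  then show ?case unfolding L by (simp add: sum.distrib sum_distrib_left)
qed

lemma block_sum_head_split:
  assumes "finite S"
  shows "block_sum g G T B S = T S * g B + (\<Sum>z\<in>S. T (S \<inter> {..<z}) * block_sum g G delta_empty B (S \<inter> {z..}))"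
  using assms
proof (induction "card S" arbitrary: S B rule: less_induct)
  case less
  have fS: "finite S" by (rule less.prems)
  have IH: "block_sum g G T (insert z B) (S \<inter> {..<z}) = T (S \<inter> {..<z}) * g (insert z B) +
     (\<Sum>w\<in>{w\<in>S. w < z}. T (S \<inter> {..<w}) * block_sum g G delta_empty (insert z B) (S \<inter> {w..} \<inter> {..<z}))"
    if z: "z \<in> S" for z
  proof -
    have "block_sum g G T (insert z B) (S \<inter> {..<z}) = T (S \<inter> {..<z}) * g (insert z B) +
      (\<Sum>w\<in>S \<inter> {..<z}. T (S \<inter> {..<z} \<inter> {..<w}) * block_sum g G delta_empty (insert z B) (S \<inter> {..<z} \<inter> {w..}))"
      using less.hyps[OF card_below_less[OF fS z]] fS by auto
    also have "(\<Sum>w\<in>S \<inter> {..<z}. T (S \<inter> {..<z} \<inter> {..<w}) * block_sum g G delta_empty (insert z B) (S \<inter> {..<z} \<inter> {w..})) =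
       (\<Sum>w\<in>{w\<in>S. w < z}. T (S \<inter> {..<w}) * block_sum g G delta_empty (insert z B) (S \<inter> {w..} \<inter> {..<z}))"
    proof (rule sum.cong)
      show "S \<inter> {..<z} = {w\<in>S. w < z}" by auto
      fix w assume "w \<in> {w\<in>S. w < z}"
      then have "S \<inter> {..<z} \<inter> {..<w} = S \<inter> {..<w}" "S \<inter> {..<z} \<inter> {w..} = S \<inter> {w..} \<inter> {..<z}" by auto
      then show "T (S \<inter> {..<z} \<inter> {..<w}) * block_sum g G delta_empty (insert z B) (S \<inter> {..<z} \<inter> {w..}) =
          T (S \<inter> {..<w}) * block_sum g G delta_empty (insert z B) (S \<inter> {w..} \<inter> {..<z})" by simp
    qed
    finally show ?thesis .
  qed
  note R = block_sum_delta_empty_Int_atLeast[OF fS]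
  have "block_sum g G T B S = g B * T S + (\<Sum>z\<in>S. G (S \<inter> {z<..}) * block_sum g G T (insert z B) (S \<inter> {..<z}))"
    by (rule block_sum_rec[OF fS])
  also have "(\<Sum>z\<in>S. G (S \<inter> {z<..}) * block_sum g G T (insert z B) (S \<inter> {..<z})) =
     (\<Sum>z\<in>S. T (S \<inter> {..<z}) * (G (S \<inter> {z<..}) * g (insert z B))) +
     (\<Sum>z\<in>S. \<Sum>w\<in>{w\<in>S. w < z}. T (S \<inter> {..<w}) * (G (S \<inter> {z<..}) * block_sum g G delta_empty (insert z B) (S \<inter> {w..} \<inter> {..<z})))"
    using IH by (simp add: distrib_left sum.distrib sum_distrib_left mult_ac)
  also have "(\<Sum>z\<in>S. \<Sum>w\<in>{w\<in>S. w < z}. T (S \<inter> {..<w}) * (G (S \<inter> {z<..}) * block_sum g G delta_empty (insert z B) (S \<inter> {w..} \<inter> {..<z}))) =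
     (\<Sum>w\<in>S. \<Sum>z\<in>{z\<in>S. w < z}. T (S \<inter> {..<w}) * (G (S \<inter> {z<..}) * block_sum g G delta_empty (insert z B) (S \<inter> {w..} \<inter> {..<z})))"
    by (rule sum.swap_restrict[OF fS fS])
  also have "(\<Sum>z\<in>S. T (S \<inter> {..<z}) * (G (S \<inter> {z<..}) * g (insert z B))) +
     (\<Sum>w\<in>S. \<Sum>z\<in>{z\<in>S. w < z}. T (S \<inter> {..<w}) * (G (S \<inter> {z<..}) * block_sum g G delta_empty (insert z B) (S \<inter> {w..} \<inter> {..<z}))) =
     (\<Sum>w\<in>S. T (S \<inter> {..<w}) * block_sum g G delta_empty B (S \<inter> {w..}))"
  proof -
    have "(\<Sum>w\<in>S. T (S \<inter> {..<w}) * block_sum g G delta_empty B (S \<inter> {w..})) =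
      (\<Sum>w\<in>S. T (S \<inter> {..<w}) * (G (S \<inter> {w<..}) * g (insert w B)) +
        (\<Sum>z\<in>{z\<in>S. w < z}. T (S \<inter> {..<w}) * (G (S \<inter> {z<..}) * block_sum g G delta_empty (insert z B) (S \<inter> {w..} \<inter> {..<z}))))"
      by (rule sum.cong[OF refl]) (simp add: R distrib_left sum_distrib_left)
    then show ?thesis by (simp add: sum.distrib)
  qed
  finally show ?case by (simp add: mult.commute)
qed

section \<open>Noncrossing partitions of finite sets\<close>

definition NC_on :: "nat set \<Rightarrow> nat set set set" where
  "NC_on S = {P. partition_on S P \<and> noncrossing P}"

definition nc_weight :: "set_weight \<Rightarrow> set_weight \<Rightarrow> nat set set \<Rightarrow> complex" where
  "nc_weight g1 g2 P = (\<Prod>V\<in>inner_blocks P. g1 V) * (\<Prod>V\<in>outer_blocks P. g2 V)"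

definition nc_sum2 :: "set_weight \<Rightarrow> set_weight \<Rightarrow> nat set \<Rightarrow> complex" where
  "nc_sum2 g1 g2 S = (\<Sum>P\<in>NC_on S. nc_weight g1 g2 P)"

definition nc_sum :: "set_weight \<Rightarrow> nat set \<Rightarrow> complex" where
  "nc_sum g S = nc_sum2 g g S"

definition NC_with_block :: "nat set \<Rightarrow> nat set \<Rightarrow> nat set set set" where
  "NC_with_block B S = {P \<in> NC_on (B \<union> S). \<exists>V\<in>P. B \<subseteq> V}"

lemma partition_on_iff: "partition_on A P \<longleftrightarrow> \<Union>P = A \<and> (\<forall>X\<in>P. \<forall>Y\<in>P. X \<noteq> Y \<longrightarrow> X \<inter> Y = {}) \<and> {} \<notin> P"
  by (auto simp: partition_on_def disjoint_def)

lemma NC_on_lessThan: "NC_on {..<n} = NC n"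
  by (simp add: NC_on_def NC_def)

lemma finite_NC_on: "finite S \<Longrightarrow> finite (NC_on S)"
  by (rule finite_subset[OF _ finitely_many_partition_on[of S]]) (auto simp: NC_on_def)

lemma finite_NC_on_partition: "finite S \<Longrightarrow> P \<in> NC_on S \<Longrightarrow> finite P"
  by (auto simp: NC_on_def intro: finite_elements)

lemma NC_with_block_subset: "NC_with_block B S \<subseteq> NC_on (B \<union> S)"
  by (auto simp: NC_with_block_def)

lemma nc_weight_same: "finite P \<Longrightarrow> nc_weight g g P = (\<Prod>V\<in>P. g V)"
  unfolding nc_weight_def outer_blocks_def
  using prod.subset_diff[OF inner_blocks_subset, of P g] by (simp add: mult.commute)

lemma nc_sum_prod: "finite S \<Longrightarrow> nc_sum g S = (\<Sum>P\<in>NC_on S. \<Prod>V\<in>P. g V)"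
  unfolding nc_sum_def nc_sum2_def by (intro sum.cong refl nc_weight_same finite_NC_on_partition)

lemma NC_on_empty: "NC_on {} = {{}}"
  by (auto simp: NC_on_def partition_on_empty noncrossing_def)

lemma nc_sum2_empty: "nc_sum2 g1 g2 {} = 1"
  by (simp add: nc_sum2_def NC_on_empty nc_weight_def inner_blocks_def outer_blocks_def)

lemma nc_sum_empty: "nc_sum g {} = 1"
  by (simp add: nc_sum_def nc_sum2_empty)

lemma noncrossing_subset:
  assumes "noncrossing P" "Q \<subseteq> P" shows "noncrossing Q"
  unfolding noncrossing_def
proof (intro ballI impI)
  fix V U assume h: "V \<in> Q" "U \<in> Q" "V \<noteq> U"
  have h2: "V \<in> P" "U \<in> P" using h assms(2) by auto
  have "\<forall>V\<in>P. \<forall>U\<in>P. V \<noteq> U \<longrightarrow> \<not> (\<exists>a b c d. a < b \<and> b < c \<and> c < d \<and> a \<in> V \<and> c \<in> V \<and> b \<in> U \<and> d \<in> U)"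
    using assms(1) unfolding noncrossing_def .
  from this[rule_format, OF h2 h(3)]
  show "\<not> (\<exists>a b c d. a < b \<and> b < c \<and> c < d \<and> a \<in> V \<and> c \<in> V \<and> b \<in> U \<and> d \<in> U)" .
qed

lemma noncrossingD:
  "noncrossing P \<Longrightarrow> V \<in> P \<Longrightarrow> U \<in> P \<Longrightarrow> V \<noteq> U \<Longrightarrow> a < b \<Longrightarrow> b < c \<Longrightarrow> c < d \<Longrightarrow>
   a \<in> V \<Longrightarrow> c \<in> V \<Longrightarrow> b \<in> U \<Longrightarrow> d \<in> U \<Longrightarrow> False"
proof -
  assume h: "noncrossing P" "V \<in> P" "U \<in> P" "V \<noteq> U" "a < b" "b < c" "c < d"
    "a \<in> V" "c \<in> V" "b \<in> U" "d \<in> U"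
  have "\<forall>V\<in>P. \<forall>U\<in>P. V \<noteq> U \<longrightarrow> \<not> (\<exists>a b c d. a < b \<and> b < c \<and> c < d \<and> a \<in> V \<and> c \<in> V \<and> b \<in> U \<and> d \<in> U)"
    using h(1) unfolding noncrossing_def .
  from this[rule_format, OF h(2,3,4)]
  have "\<not> (\<exists>a b c d. a < b \<and> b < c \<and> c < d \<and> a \<in> V \<and> c \<in> V \<and> b \<in> U \<and> d \<in> U)" .
  moreover have "\<exists>a b c d. a < b \<and> b < c \<and> c < d \<and> a \<in> V \<and> c \<in> V \<and> b \<in> U \<and> d \<in> U"
    using h(5-11) by (intro exI[of _ a] exI[of _ b] exI[of _ c] exI[of _ d]) simp
  ultimately show False by (rule notE)
qed

definition order_convex :: "nat set \<Rightarrow> bool" where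
  "order_convex J \<longleftrightarrow> (\<forall>x z w. x \<in> J \<longrightarrow> z \<in> J \<longrightarrow> x < w \<longrightarrow> w < z \<longrightarrow> w \<in> J)"

lemma order_convexD: "order_convex J \<Longrightarrow> x \<in> J \<Longrightarrow> z \<in> J \<Longrightarrow> x < w \<Longrightarrow> w < z \<Longrightarrow> w \<in> J"
  unfolding order_convex_def by (elim allE impE) auto

lemma noncrossing_union_convex:
  assumes "noncrossing P1" "noncrossing P2" "order_convex J"
    and "\<And>X. X \<in> P1 \<Longrightarrow> X \<subseteq> J" "\<And>W. W \<in> P2 \<Longrightarrow> W \<inter> J = {}"
  shows "noncrossing (P1 \<union> P2)"
  unfolding noncrossing_def
proof (intro ballI impI notI)
  fix V U assume V: "V \<in> P1 \<union> P2" and U: "U \<in> P1 \<union> P2" and ne: "V \<noteq> U"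
    and "\<exists>a b c d. a < b \<and> b < c \<and> c < d \<and> a \<in> V \<and> c \<in> V \<and> b \<in> U \<and> d \<in> U"
  then obtain a b c d where abcd: "a < b" "b < c" "c < d" "a \<in> V" "c \<in> V" "b \<in> U" "d \<in> U" by blast
  consider "V \<in> P1" "U \<in> P1" | "V \<in> P2" "U \<in> P2" | "V \<in> P1" "U \<in> P2" | "V \<in> P2" "U \<in> P1"
    using V U by blast
  then show False
  proof cases
    case 1 then show ?thesis using noncrossingD[OF assms(1) _ _ ne abcd] by blast
  next
    case 2 then show ?thesis using noncrossingD[OF assms(2) _ _ ne abcd] by blast
  next
    case 3
    have "b \<in> J" using order_convexD[OF assms(3), of a c b] assms(4)[OF 3(1)] abcd by blast
    then show ?thesis using assms(5)[OF 3(2)] abcd by blast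
  next
    case 4
    have "c \<in> J" using order_convexD[OF assms(3), of b d c] assms(4)[OF 4(2)] abcd by blast
    then show ?thesis using assms(5)[OF 4(1)] abcd by blast
  qed
qed

lemma inner_blocksI: "V \<in> P \<Longrightarrow> U \<in> P \<Longrightarrow> U \<noteq> V \<Longrightarrow> i < j \<Longrightarrow> j < k \<Longrightarrow> j \<in> V \<Longrightarrow> i \<in> U \<Longrightarrow> k \<in> U \<Longrightarrow> V \<in> inner_blocks P"
  unfolding inner_blocks_def by blast

lemma inner_blocksE:
  assumes "V \<in> inner_blocks P"
  obtains U i j k where "V \<in> P" "U \<in> P" "U \<noteq> V" "i < j" "j < k" "j \<in> V" "i \<in> U" "k \<in> U"
  using assms unfolding inner_blocks_def by blast

context
  fixes J P1 P2
  assumes convex: "order_convex J" and P1: "\<And>X. X \<in> P1 \<Longrightarrow> X \<subseteq> J"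
    and P2: "\<And>W. W \<in> P2 \<Longrightarrow> W \<inter> J = {}"
begin

lemma inner_blocks_union_convex_subset: "inner_blocks (P1 \<union> P2) \<subseteq> P1 \<union> inner_blocks P2"
proof
  fix V assume "V \<in> inner_blocks (P1 \<union> P2)"
  then obtain U i j k where h: "V \<in> P1 \<union> P2" "U \<in> P1 \<union> P2" "U \<noteq> V" "i < j" "j < k" "j \<in> V" "i \<in> U" "k \<in> U"
    by (rule inner_blocksE)
  show "V \<in> P1 \<union> inner_blocks P2"
  proof (cases "V \<in> P1")
    case False
    then have VP2: "V \<in> P2" using h by blast
    show ?thesis
    proof (cases "U \<in> P1")
      case True
      have "j \<in> J" using order_convexD[OF convex, of i k j] P1[OF True] h by blast
      then show ?thesis using P2[OF VP2] h by blast
    next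
      case False
      then show ?thesis using inner_blocksI[OF VP2 _ h(3-8)] h(2) by blast
    qed
  qed simp
qed

lemma inner_blocks_union_convex:
  assumes "\<And>X. X \<in> P1 \<Longrightarrow> X \<noteq> {}"
    and "V0 \<in> P2" "i0 \<in> V0" "k0 \<in> V0" "\<And>x. x \<in> J \<Longrightarrow> i0 < x \<and> x < k0"
  shows "inner_blocks (P1 \<union> P2) = P1 \<union> inner_blocks P2"
proof (rule equalityI[OF inner_blocks_union_convex_subset])
  show "P1 \<union> inner_blocks P2 \<subseteq> inner_blocks (P1 \<union> P2)"
  proof
    fix V assume V: "V \<in> P1 \<union> inner_blocks P2"
    show "V \<in> inner_blocks (P1 \<union> P2)"
    proof (cases "V \<in> P1")
      case True
      obtain x where x: "x \<in> V" using assms(1)[OF True] by blast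
      have xJ: "x \<in> J" using P1[OF True] x by blast
      have "V0 \<noteq> V" using P2[OF assms(2)] xJ x by blast
      then show ?thesis
        using inner_blocksI[of V "P1 \<union> P2" V0 i0 x k0] True assms(2-4) assms(5)[OF xJ] x by blast
    next
      case False
      then obtain U i j k where h: "V \<in> P2" "U \<in> P2" "U \<noteq> V" "i < j" "j < k" "j \<in> V" "i \<in> U" "k \<in> U"
        using V by (blast elim: inner_blocksE)
      then show ?thesis using inner_blocksI[of V "P1 \<union> P2" U i j k] by blast
    qed
  qed
qed

end

lemma partition_onE:
  assumes "partition_on A P"
  shows "\<Union>P = A" "\<And>X Y. X \<in> P \<Longrightarrow> Y \<in> P \<Longrightarrow> X \<noteq> Y \<Longrightarrow> X \<inter> Y = {}" "\<And>X. X \<in> P \<Longrightarrow> X \<noteq> {}"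
  using assms unfolding partition_on_iff by blast+

lemma partition_onI2:
  assumes "\<Union>P = A" "\<And>X Y. X \<in> P \<Longrightarrow> Y \<in> P \<Longrightarrow> X \<noteq> Y \<Longrightarrow> X \<inter> Y = {}" "\<And>X. X \<in> P \<Longrightarrow> X \<noteq> {}"
  shows "partition_on A P"
  using assms unfolding partition_on_iff by blast

lemma NC_onD: "P \<in> NC_on S \<Longrightarrow> partition_on S P" "P \<in> NC_on S \<Longrightarrow> noncrossing P"
  by (simp_all add: NC_on_def)

lemma noncrossing_single: "noncrossing {B}"
  unfolding noncrossing_def by simp

lemma order_convex_lessThan: "order_convex {..<m}"
  unfolding order_convex_def by auto

lemma order_convex_between: "order_convex {y<..<m}"
  unfolding order_convex_def by auto

lemma inner_insert_top:
  assumes "\<And>X x b. X \<in> P' \<Longrightarrow> x \<in> X \<Longrightarrow> b \<in> B \<Longrightarrow> x < b" "B \<notin> P'"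
  shows "inner_blocks (insert B P') = inner_blocks P'"
proof
  show "inner_blocks (insert B P') \<subseteq> inner_blocks P'"
  proof
    fix V assume "V \<in> inner_blocks (insert B P')"
    then obtain U i j k where h: "V \<in> insert B P'" "U \<in> insert B P'" "U \<noteq> V" "i < j" "j < k" "j \<in> V" "i \<in> U" "k \<in> U"
      by (rule inner_blocksE)
    show "V \<in> inner_blocks P'"
    proof (cases "V = B")
      case True
      then have "U \<in> P'" using h by auto
      then have "k < j" using assms(1) h True by blast
      then show ?thesis using h by simp
    next
      case False
      then have VP: "V \<in> P'" using h by auto
      show ?thesis
      proof (cases "U = B")
        case True
        then have "j < i" using assms(1)[OF VP h(6)] h by blast
        then show ?thesis using h by simp
      next
        case False
        then have "U \<in> P'" using h by auto
        then show ?thesis using inner_blocksI[OF VP _ h(3-8)] by blast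
      qed
    qed
  qed
  show "inner_blocks P' \<subseteq> inner_blocks (insert B P')"
  proof
    fix V assume "V \<in> inner_blocks P'"
    then obtain U i j k where h: "V \<in> P'" "U \<in> P'" "U \<noteq> V" "i < j" "j < k" "j \<in> V" "i \<in> U" "k \<in> U"
      by (rule inner_blocksE)
    then show "V \<in> inner_blocks (insert B P')" using inner_blocksI[of V "insert B P'" U i j k] by blast
  qed
qed

locale block_above =
  fixes B S :: "nat set"
  assumes finite_rest: "finite S" and finite_block: "finite B" and block_nonempty: "B \<noteq> {}"
    and rest_below_block: "\<And>s b. s \<in> S \<Longrightarrow> b \<in> B \<Longrightarrow> s < b"
begin

lemma block_rest_disjoint: "B \<inter> S = {}"
  using rest_below_block by fastforce

lemma Min_block: "Min B \<in> B"
  using finite_block block_nonempty by simp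

lemma insert_block_NC_with_block:
  assumes "P' \<in> NC_on S"
  shows "insert B P' \<in> NC_with_block B S"
proof -
  have p: "partition_on S P'" and nc: "noncrossing P'" using NC_onD[OF assms] by auto
  have u: "\<Union>P' = S" using partition_onE(1)[OF p] .
  have d: "disjnt B (\<Union>P')" using u block_rest_disjoint by (simp add: disjnt_def)
  have "(B \<union> S) - B = S" using block_rest_disjoint by auto
  then have "partition_on (B \<union> S) (insert B P')"
    using partition_on_insert[OF d] p block_nonempty by auto
  moreover have "noncrossing (P' \<union> {B})"
  proof (rule noncrossing_union_convex[OF nc noncrossing_single order_convex_lessThan[of "Min B"]])
    fix X assume "X \<in> P'"
    then have "X \<subseteq> S" using u by blast
    then show "X \<subseteq> {..<Min B}" using rest_below_block Min_block by auto
  next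
    fix W assume "W \<in> {B}"
    then show "W \<inter> {..<Min B} = {}" using finite_block Min_le[OF finite_block] by (auto simp: not_less[symmetric])
  qed
  ultimately show ?thesis unfolding NC_with_block_def NC_on_def by auto
qed

lemma block_notin_NC_on: "P' \<in> NC_on S \<Longrightarrow> B \<notin> P'"
proof
  assume "P' \<in> NC_on S" "B \<in> P'"
  then have "B \<subseteq> S" using partition_onE(1)[OF NC_onD(1)] by blast
  then show False using block_rest_disjoint block_nonempty by blast
qed

lemma nc_weight_insert_top:
  assumes "P' \<in> NC_on S"
  shows "nc_weight g1 g2 (insert B P') = g2 B * nc_weight g1 g2 P'"
proof -
  have u: "\<Union>P' = S" using partition_onE(1)[OF NC_onD(1)[OF assms]] .
  have nB: "B \<notin> P'" using block_notin_NC_on[OF assms] .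
  have fP: "finite P'" using finite_NC_on_partition[OF finite_rest assms] .
  have inn: "inner_blocks (insert B P') = inner_blocks P'"
    using u rest_below_block nB by (intro inner_insert_top) auto
  have "outer_blocks (insert B P') = insert B (outer_blocks P')"
    unfolding outer_blocks_def inn using nB inner_blocks_subset[of P'] by auto
  moreover have "B \<notin> outer_blocks P'" using nB by (simp add: outer_blocks_def)
  moreover have "finite (outer_blocks P')" using fP by (simp add: outer_blocks_def)
  ultimately show ?thesis unfolding nc_weight_def inn by simp
qed

context
  fixes y P1 P2
  assumes y: "y \<in> S" and P1: "P1 \<in> NC_on (S \<inter> {y<..})"
    and P2: "P2 \<in> NC_with_block (insert y B) (S \<inter> {..<y})"
begin

lemma partition_on_join_right: "partition_on (insert y B \<union> S \<inter> {..<y}) P2"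
  using P2 NC_with_block_subset NC_onD(1) by blast

lemma join_left_block: "X \<in> P1 \<Longrightarrow> X \<subseteq> S \<inter> {y<..}"
  using partition_onE(1)[OF NC_onD(1)[OF P1]] by blast

lemma join_right_block: "W \<in> P2 \<Longrightarrow> W \<inter> (S \<inter> {y<..}) = {}"
proof -
  assume "W \<in> P2"
  then have "W \<subseteq> insert y B \<union> S \<inter> {..<y}" using partition_onE(1)[OF partition_on_join_right] by blast
  then show "W \<inter> (S \<inter> {y<..}) = {}" using block_rest_disjoint by auto
qed

lemma join_left_block_between: "X \<in> P1 \<Longrightarrow> X \<subseteq> {y<..<Min B}"
proof
  fix x assume "X \<in> P1" "x \<in> X"
  then have "x \<in> S" "y < x" using join_left_block by auto
  then show "x \<in> {y<..<Min B}" using rest_below_block[OF _ Min_block] by auto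
qed

lemma join_right_block_outside: "W \<in> P2 \<Longrightarrow> W \<inter> {y<..<Min B} = {}"
proof -
  assume "W \<in> P2"
  then have "W \<subseteq> insert y B \<union> S \<inter> {..<y}" using partition_onE(1)[OF partition_on_join_right] by blast
  moreover have "x \<notin> B" if "x < Min B" for x using Min_le[OF finite_block] that by (auto simp: not_less[symmetric])
  ultimately show ?thesis by fastforce
qed

lemma join_blocks_distinct: "X \<in> P1 \<Longrightarrow> W \<in> P2 \<Longrightarrow> X \<noteq> W"
proof -
  assume X: "X \<in> P1" and W: "W \<in> P2"
  have "X \<subseteq> {y<..<Min B}" "W \<inter> {y<..<Min B} = {}" "X \<noteq> {}"
    using join_left_block_between[OF X] join_right_block_outside[OF W]
      partition_onE(3)[OF NC_onD(1)[OF P1] X] by auto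
  then show "X \<noteq> W" by blast
qed

lemma join_NC_with_block: "P1 \<union> P2 \<in> NC_with_block B S"
proof -
  have p1: "partition_on (S \<inter> {y<..}) P1" using NC_onD[OF P1] by auto
  note p2 = partition_on_join_right
  have "partition_on (B \<union> S) (P1 \<union> P2)"
  proof (rule partition_onI2)
    show "\<Union>(P1 \<union> P2) = B \<union> S" using partition_onE(1)[OF p1] partition_onE(1)[OF p2] y by auto
    fix X Y assume XY: "X \<in> P1 \<union> P2" "Y \<in> P1 \<union> P2" "X \<noteq> Y"
    then show "X \<inter> Y = {}"
      using partition_onE(2)[OF p1] partition_onE(2)[OF p2]
        join_left_block_between join_right_block_outside by blast
  qed (use partition_onE(3)[OF p1] partition_onE(3)[OF p2] in blast)
  moreover have "noncrossing (P1 \<union> P2)"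
    using NC_onD(2)[OF P1] P2 NC_with_block_subset NC_onD(2)
    by (blast intro: noncrossing_union_convex[OF _ _ order_convex_between join_left_block_between
          join_right_block_outside])
  moreover obtain V where "V \<in> P2" "insert y B \<subseteq> V" using P2 by (auto simp: NC_with_block_def)
  ultimately show ?thesis unfolding NC_with_block_def NC_on_def by auto
qed

lemma nc_weight_join: "nc_weight g1 g2 (P1 \<union> P2) = (\<Prod>X\<in>P1. g1 X) * nc_weight g1 g2 P2"
proof -
  obtain V where V: "V \<in> P2" "insert y B \<subseteq> V" using P2 by (auto simp: NC_with_block_def)
  then have "y \<in> V" "Min B \<in> V" using Min_block by auto
  then have inn: "inner_blocks (P1 \<union> P2) = P1 \<union> inner_blocks P2"
    using partition_onE(3)[OF NC_onD(1)[OF P1]]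
    by (intro inner_blocks_union_convex[OF order_convex_between join_left_block_between
          join_right_block_outside _ V(1)]) auto
  have fP1: "finite P1" using finite_NC_on_partition[OF _ P1] finite_rest by simp
  have "P2 \<in> NC_on (insert y B \<union> S \<inter> {..<y})" using P2 NC_with_block_subset by blast
  then have fP2: "finite P2" by (rule finite_NC_on_partition[rotated]) (use finite_rest finite_block in simp)
  have "P1 \<inter> inner_blocks P2 = {}" using join_blocks_distinct inner_blocks_subset by blast
  then have "(\<Prod>V\<in>P1 \<union> inner_blocks P2. g1 V) = (\<Prod>V\<in>P1. g1 V) * (\<Prod>V\<in>inner_blocks P2. g1 V)"
    by (rule prod.union_disjoint[OF fP1 finite_subset[OF inner_blocks_subset fP2]])
  moreover have "outer_blocks (P1 \<union> P2) = outer_blocks P2"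
    unfolding outer_blocks_def inn using join_blocks_distinct by auto
  ultimately show ?thesis unfolding nc_weight_def inn by (simp add: mult.assoc)
qed

end

lemma NC_with_block_remove_block:
  assumes "P \<in> NC_with_block B S" "B \<in> P"
  shows "P - {B} \<in> NC_on S"
proof -
  have p: "partition_on (B \<union> S) P" and nc: "noncrossing P"
    using assms(1) NC_with_block_subset NC_onD by blast+
  have d: "disjnt B (\<Union>(P - {B}))" using partition_onE(2)[OF p] assms(2) by (auto simp: disjnt_def)
  have "partition_on (B \<union> S) (insert B (P - {B}))" using p assms(2) by (simp add: insert_absorb)
  then have "partition_on ((B \<union> S) - B) (P - {B})" using partition_on_insert[OF d] by blast
  moreover have "(B \<union> S) - B = S" using block_rest_disjoint by auto
  moreover have "noncrossing (P - {B})" using nc noncrossing_subset by blast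
  ultimately show ?thesis by (simp add: NC_on_def)
qed

text \<open>If the block \<open>V \<supseteq> B\<close> reaches into \<open>S\<close>, let \<open>y\<close> be its largest point in \<open>S\<close>: the blocks
  between \<open>y\<close> and \<open>B\<close> form a partition of \<open>S \<inter> {y<..}\<close>, the others one of the rest with \<open>y\<close>
  joined to the top block.\<close>

context
  fixes P V y
  assumes P: "P \<in> NC_with_block B S" and V: "V \<in> P" "B \<subseteq> V" "V \<noteq> B"
    and y: "y = Max (V \<inter> S)"
begin

lemma partition_on_split: "partition_on (B \<union> S) P"
  using P NC_with_block_subset NC_onD(1) by blast

lemma noncrossing_split: "noncrossing P"
  using P NC_with_block_subset NC_onD(2) by blast

lemma Max_block_rest: "y \<in> V" "y \<in> S" "V \<inter> (S \<inter> {y<..}) = {}"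
proof -
  have "V \<subseteq> B \<union> S" using partition_onE(1)[OF partition_on_split] V(1) by blast
  then have ne: "V \<inter> S \<noteq> {}" using V(2,3) by blast
  show "y \<in> V" "y \<in> S" using Max_in[OF _ ne] finite_rest y by auto
  show "V \<inter> (S \<inter> {y<..}) = {}" using Max_ge[of "V \<inter> S"] finite_rest y by (auto simp: not_less[symmetric])
qed

lemma block_meeting_above_Max:
  assumes X: "X \<in> P" "X \<noteq> V" "X \<inter> (S \<inter> {y<..}) \<noteq> {}"
  shows "X \<subseteq> S \<inter> {y<..}"
proof
  fix x assume x: "x \<in> X"
  have XV: "X \<inter> V = {}" using partition_onE(2)[OF partition_on_split X(1) V(1) X(2)] .
  have xS: "x \<in> S" using x XV V(2) X(1) partition_onE(1)[OF partition_on_split] by blast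
  obtain x' where x': "x' \<in> X" "x' \<in> S" "y < x'" using X(3) by blast
  have "y < x"
  proof (rule ccontr)
    assume "\<not> y < x"
    moreover have "x \<noteq> y" using x Max_block_rest(1) XV by blast
    ultimately have xy: "x < y" by simp
    have "x' < Min B" using rest_below_block[OF x'(2) Min_block] .
    then show False
      using noncrossingD[OF NC_onD(2) X(1) V(1) X(2) xy x'(3) _ x x'(1) Max_block_rest(1)]
        P NC_with_block_subset V(2) Min_block by blast
  qed
  then show "x \<in> S \<inter> {y<..}" using xS by simp
qed

lemma split_above_NC_on: "{X\<in>P. X \<subseteq> S \<inter> {y<..}} \<in> NC_on (S \<inter> {y<..})"
proof -
  have "S \<inter> {y<..} \<subseteq> \<Union>{X\<in>P. X \<subseteq> S \<inter> {y<..}}"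
  proof
    fix s assume s: "s \<in> S \<inter> {y<..}"
    then obtain X where X: "X \<in> P" "s \<in> X" using partition_onE(1)[OF partition_on_split] by blast
    then have "X \<noteq> V" using Max_block_rest(3) s by blast
    then show "s \<in> \<Union>{X\<in>P. X \<subseteq> S \<inter> {y<..}}" using block_meeting_above_Max X s by blast
  qed
  then have "partition_on (S \<inter> {y<..}) {X\<in>P. X \<subseteq> S \<inter> {y<..}}"
    using partition_onE(2,3)[OF partition_on_split] by (intro partition_onI2) auto
  moreover have "noncrossing {X\<in>P. X \<subseteq> S \<inter> {y<..}}"
    by (rule noncrossing_subset[OF noncrossing_split]) auto
  ultimately show ?thesis by (simp add: NC_on_def)
qed

lemma split_below_NC_with_block:
  "P - {X\<in>P. X \<subseteq> S \<inter> {y<..}} \<in> NC_with_block (insert y B) (S \<inter> {..<y})"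
proof -
  let ?P2 = "P - {X\<in>P. X \<subseteq> S \<inter> {y<..}}"
  have W2: "W \<inter> (S \<inter> {y<..}) = {}" if "W \<in> ?P2" for W
    using that block_meeting_above_Max Max_block_rest(3) by blast
  have "\<Union>?P2 = insert y B \<union> S \<inter> {..<y}"
  proof
    show "\<Union>?P2 \<subseteq> insert y B \<union> S \<inter> {..<y}"
      using W2 partition_onE(1)[OF partition_on_split] by fastforce
    show "insert y B \<union> S \<inter> {..<y} \<subseteq> \<Union>?P2"
    proof
      fix e assume e: "e \<in> insert y B \<union> S \<inter> {..<y}"
      then have "e \<in> B \<union> S" using Max_block_rest by auto
      then obtain W where W: "W \<in> P" "e \<in> W" using partition_onE(1)[OF partition_on_split] by blast
      have "e \<notin> S \<inter> {y<..}" using e block_rest_disjoint by auto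
      then show "e \<in> \<Union>?P2" using W by auto
    qed
  qed
  then have "partition_on (insert y B \<union> S \<inter> {..<y}) ?P2"
    using partition_onE(2,3)[OF partition_on_split] by (intro partition_onI2) auto
  moreover have "V \<in> ?P2" using V block_nonempty block_rest_disjoint by auto
  moreover have "insert y B \<subseteq> V" using Max_block_rest V by auto
  moreover have "noncrossing ?P2"
    by (rule noncrossing_subset[OF noncrossing_split]) auto
  ultimately show ?thesis by (auto simp: NC_with_block_def NC_on_def)
qed

end

lemma NC_with_block_cases:
  assumes P: "P \<in> NC_with_block B S"
  shows "P \<in> insert B ` NC_on S \<or> (\<exists>y\<in>S. \<exists>P1 P2. P1 \<in> NC_on (S \<inter> {y<..}) \<and>
           P2 \<in> NC_with_block (insert y B) (S \<inter> {..<y}) \<and> P = P1 \<union> P2)"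
proof -
  obtain V where V: "V \<in> P" "B \<subseteq> V" using P by (auto simp: NC_with_block_def)
  show ?thesis
  proof (cases "V = B")
    case True
    then have "P = insert B (P - {B})" using V by auto
    then show ?thesis using NC_with_block_remove_block[OF P] V True by blast
  next
    case False
    let ?y = "Max (V \<inter> S)"
    have "P = {X\<in>P. X \<subseteq> S \<inter> {?y<..}} \<union> (P - {X\<in>P. X \<subseteq> S \<inter> {?y<..}})" by auto
    then show ?thesis
      using Max_block_rest(2)[OF P V False refl] split_above_NC_on[OF P V False refl]
        split_below_NC_with_block[OF P V False refl] by blast
  qed
qed

lemma NC_with_block_unique:
  assumes "P \<in> NC_with_block B S" "V \<in> P" "W \<in> P" "B \<subseteq> V" "B \<subseteq> W"
  shows "V = W"
proof (rule ccontr)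
  assume "V \<noteq> W"
  have "P \<in> NC_on (B \<union> S)" using assms(1) NC_with_block_subset by blast
  then have "V \<inter> W = {}" using partition_onE(2)[OF NC_onD(1)] assms(2,3) \<open>V \<noteq> W\<close> by blast
  then show False using assms(4,5) block_nonempty by blast
qed

lemma NC_with_block_nonempty: "P \<in> NC_with_block B' S' \<Longrightarrow> X \<in> P \<Longrightarrow> X \<noteq> {}"
  using NC_with_block_subset partition_onE(3)[OF NC_onD(1)] by blast

definition joins :: "nat \<Rightarrow> nat set set set" where
  "joins y = (\<lambda>p. fst p \<union> snd p) ` (NC_on (S \<inter> {y<..}) \<times> NC_with_block (insert y B) (S \<inter> {..<y}))"

lemma NC_with_block_decomposition: "NC_with_block B S = insert B ` NC_on S \<union> (\<Union>y\<in>S. joins y)"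
proof
  show "NC_with_block B S \<subseteq> insert B ` NC_on S \<union> (\<Union>y\<in>S. joins y)"
  proof
    fix P assume "P \<in> NC_with_block B S"
    from NC_with_block_cases[OF this] show "P \<in> insert B ` NC_on S \<union> (\<Union>y\<in>S. joins y)"
    proof
      assume "\<exists>y\<in>S. \<exists>P1 P2. P1 \<in> NC_on (S \<inter> {y<..}) \<and>
           P2 \<in> NC_with_block (insert y B) (S \<inter> {..<y}) \<and> P = P1 \<union> P2"
      then obtain y P1 P2 where "y \<in> S" "P1 \<in> NC_on (S \<inter> {y<..})"
        "P2 \<in> NC_with_block (insert y B) (S \<inter> {..<y})" "P = P1 \<union> P2" by blast
      then have "P \<in> joins y" unfolding joins_def by (intro image_eqI[of _ _ "(P1, P2)"]) auto
      then show ?thesis using \<open>y \<in> S\<close> by blast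
    qed blast
  qed
  show "insert B ` NC_on S \<union> (\<Union>y\<in>S. joins y) \<subseteq> NC_with_block B S"
    using insert_block_NC_with_block join_NC_with_block by (auto simp: joins_def)
qed

lemma insert_block_notin_joins:
  assumes "y \<in> S"
  shows "insert B ` NC_on S \<inter> joins y = {}"
proof (rule ccontr)
  assume "insert B ` NC_on S \<inter> joins y \<noteq> {}"
  then obtain P' P1 P2 where P': "P' \<in> NC_on S" and P12: "P1 \<in> NC_on (S \<inter> {y<..})"
    "P2 \<in> NC_with_block (insert y B) (S \<inter> {..<y})" "insert B P' = P1 \<union> P2"
    by (auto simp: joins_def)
  obtain V where V: "V \<in> P2" "insert y B \<subseteq> V" using P12(2) by (auto simp: NC_with_block_def)
  have "V = B"
    using NC_with_block_unique[OF insert_block_NC_with_block[OF P'], of V B] V P12(3) by auto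
  then show False using V(2) assms block_rest_disjoint by blast
qed

lemma joins_disjoint:
  assumes "y \<in> S" "z \<in> S" "y < z"
  shows "joins y \<inter> joins z = {}"
proof (rule ccontr)
  assume "joins y \<inter> joins z \<noteq> {}"
  then obtain P1 P2 P1' P2' where P12: "P1 \<in> NC_on (S \<inter> {y<..})" "P2 \<in> NC_with_block (insert y B) (S \<inter> {..<y})"
    and P12': "P1' \<in> NC_on (S \<inter> {z<..})" "P2' \<in> NC_with_block (insert z B) (S \<inter> {..<z})"
    and eq: "P1 \<union> P2 = P1' \<union> P2'"
    by (auto simp: joins_def)
  obtain V where V: "V \<in> P2" "insert y B \<subseteq> V" using P12(2) by (auto simp: NC_with_block_def)
  obtain V' where V': "V' \<in> P2'" "insert z B \<subseteq> V'" using P12'(2) by (auto simp: NC_with_block_def)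
  have "V = V'"
    using NC_with_block_unique[OF join_NC_with_block[OF assms(1) P12], of V V'] V V' eq by auto
  then show False using join_right_block[OF assms(1) P12 V(1)] V' assms by blast
qed

lemma inj_on_join:
  assumes "y \<in> S"
  shows "inj_on (\<lambda>p. fst p \<union> snd p) (NC_on (S \<inter> {y<..}) \<times> NC_with_block (insert y B) (S \<inter> {..<y}))"
proof -
  have c: "fst p = {X \<in> fst p \<union> snd p. X \<subseteq> S \<inter> {y<..}}" "snd p = (fst p \<union> snd p) - fst p"
    if "p \<in> NC_on (S \<inter> {y<..}) \<times> NC_with_block (insert y B) (S \<inter> {..<y})" for p
  proof -
    have p1: "fst p \<in> NC_on (S \<inter> {y<..})" and p2: "snd p \<in> NC_with_block (insert y B) (S \<inter> {..<y})"
      using that by auto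
    have a: "X \<subseteq> S \<inter> {y<..}" if "X \<in> fst p" for X using join_left_block[OF assms p1 p2 that] .
    have b: "\<not> W \<subseteq> S \<inter> {y<..}" if "W \<in> snd p" for W
      using join_right_block[OF assms p1 p2 that] NC_with_block_nonempty[OF p2 that] by blast
    show "fst p = {X \<in> fst p \<union> snd p. X \<subseteq> S \<inter> {y<..}}" using a b by auto
    show "snd p = (fst p \<union> snd p) - fst p" using a b by blast
  qed
  show ?thesis
  proof (rule inj_onI)
    fix p q assume p: "p \<in> NC_on (S \<inter> {y<..}) \<times> NC_with_block (insert y B) (S \<inter> {..<y})"
      and q: "q \<in> NC_on (S \<inter> {y<..}) \<times> NC_with_block (insert y B) (S \<inter> {..<y})"
      and e: "fst p \<union> snd p = fst q \<union> snd q"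
    have "fst p = fst q" using c[OF p] c[OF q] e by simp
    moreover have "snd p = snd q" using c[OF p] c[OF q] e \<open>fst p = fst q\<close> by simp
    ultimately show "p = q" by (simp add: prod_eq_iff)
  qed
qed

lemma sum_nc_weight_insert_block: "(\<Sum>P\<in>insert B ` NC_on S. nc_weight g1 g2 P) = g2 B * nc_sum2 g1 g2 S"
proof -
  have "inj_on (insert B) (NC_on S)"
    by (rule inj_onI) (metis block_notin_NC_on insert_ident)
  then show ?thesis
    by (simp add: sum.reindex nc_weight_insert_top nc_sum2_def sum_distrib_left)
qed

lemma sum_nc_weight_joins:
  assumes "y \<in> S"
  shows "(\<Sum>P\<in>joins y. nc_weight g1 g2 P) =
    nc_sum g1 (S \<inter> {y<..}) * (\<Sum>P2\<in>NC_with_block (insert y B) (S \<inter> {..<y}). nc_weight g1 g2 P2)"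
proof -
  have "(\<Sum>P\<in>joins y. nc_weight g1 g2 P) = (\<Sum>p\<in>NC_on (S \<inter> {y<..}) \<times> NC_with_block (insert y B) (S \<inter> {..<y}).
      (\<Prod>X\<in>fst p. g1 X) * nc_weight g1 g2 (snd p))"
    unfolding joins_def sum.reindex[OF inj_on_join[OF assms]]
    by (intro sum.cong refl) (auto simp: nc_weight_join[OF assms])
  then show ?thesis
    using finite_rest by (simp add: sum.cartesian_product split_beta nc_sum_prod sum_product)
qed

lemma sum_NC_with_block_step:
  assumes "\<And>y. y \<in> S \<Longrightarrow> (\<Sum>P\<in>NC_with_block (insert y B) (S \<inter> {..<y}). nc_weight g1 g2 P) =
      block_sum g2 (nc_sum g1) (nc_sum2 g1 g2) (insert y B) (S \<inter> {..<y})"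
  shows "(\<Sum>P\<in>NC_with_block B S. nc_weight g1 g2 P) = block_sum g2 (nc_sum g1) (nc_sum2 g1 g2) B S"
proof -
  have fin: "finite (joins y)" for y
  proof -
    have "finite (NC_with_block (insert y B) (S \<inter> {..<y}))"
      by (rule finite_subset[OF NC_with_block_subset finite_NC_on]) (use finite_rest finite_block in simp)
    then show ?thesis unfolding joins_def using finite_NC_on[of "S \<inter> {y<..}"] finite_rest by simp
  qed
  have d0: "insert B ` NC_on S \<inter> (\<Union>y\<in>S. joins y) = {}" using insert_block_notin_joins by blast
  have dy: "joins y \<inter> joins z = {}" if "y \<in> S" "z \<in> S" "y \<noteq> z" for y z
    using joins_disjoint[of y z] joins_disjoint[of z y] that by (cases "y < z") (auto simp: Int_commute)
  have "(\<Sum>P\<in>NC_with_block B S. nc_weight g1 g2 P) =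
      (\<Sum>P\<in>insert B ` NC_on S. nc_weight g1 g2 P) + (\<Sum>P\<in>(\<Union>y\<in>S. joins y). nc_weight g1 g2 P)"
    unfolding NC_with_block_decomposition
    by (rule sum.union_disjoint) (use finite_rest finite_NC_on fin d0 in auto)
  also have "(\<Sum>P\<in>(\<Union>y\<in>S. joins y). nc_weight g1 g2 P) = (\<Sum>y\<in>S. \<Sum>P\<in>joins y. nc_weight g1 g2 P)"
    by (rule sum.UNION_disjoint) (use finite_rest fin dy in auto)
  finally have "(\<Sum>P\<in>NC_with_block B S. nc_weight g1 g2 P) =
      (\<Sum>P\<in>insert B ` NC_on S. nc_weight g1 g2 P) + (\<Sum>y\<in>S. \<Sum>P\<in>joins y. nc_weight g1 g2 P)" .
  then show ?thesis
    by (simp add: sum_nc_weight_insert_block sum_nc_weight_joins assms block_sum_rec[OF finite_rest]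
        mult.commute cong: sum.cong)
qed

end

lemma sum_NC_with_block:
  assumes "finite S" "finite B" "B \<noteq> {}" "\<And>s b. s \<in> S \<Longrightarrow> b \<in> B \<Longrightarrow> s < b"
  shows "(\<Sum>P\<in>NC_with_block B S. nc_weight g1 g2 P) = block_sum g2 (nc_sum g1) (nc_sum2 g1 g2) B S"
  using assms
proof (induction "card S" arbitrary: S B rule: less_induct)
  case less
  interpret block_above B S by (rule block_above.intro) (use less.prems in auto)
  show ?case
  proof (rule sum_NC_with_block_step)
    fix y assume y: "y \<in> S"
    show "(\<Sum>P\<in>NC_with_block (insert y B) (S \<inter> {..<y}). nc_weight g1 g2 P) = block_sum g2 (nc_sum g1) (nc_sum2 g1 g2) (insert y B) (S \<inter> {..<y})"
    proof (rule less.hyps)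
      show "card (S \<inter> {..<y}) < card S" using card_below_less[OF less.prems(1) y] .
      show "finite (S \<inter> {..<y})" using less.prems(1) by simp
      show "finite (insert y B)" using less.prems(2) by simp
      show "insert y B \<noteq> {}" by simp
      fix s b assume "s \<in> S \<inter> {..<y}" "b \<in> insert y B"
      then show "s < b" using less.prems(4)[of s b] by auto
    qed
  qed
qed

lemma nc_sum2_block_sum:
  assumes "finite S" "S \<noteq> {}"
  shows "nc_sum2 g1 g2 S = block_sum g2 (nc_sum g1) (nc_sum2 g1 g2) {Max S} (S - {Max S})"
proof -
  have M: "Max S \<in> S" using Max_in[OF assms] .
  have e: "{Max S} \<union> (S - {Max S}) = S" using M by auto
  have "NC_with_block {Max S} (S - {Max S}) = NC_on S"
  proof
    show "NC_with_block {Max S} (S - {Max S}) \<subseteq> NC_on S" using NC_with_block_subset e by metis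
    show "NC_on S \<subseteq> NC_with_block {Max S} (S - {Max S})"
    proof
      fix P assume P: "P \<in> NC_on S"
      then have "Max S \<in> \<Union>P" using partition_onE(1)[OF NC_onD(1)[OF P]] M by simp
      then obtain V where "V \<in> P" "Max S \<in> V" by blast
      then show "P \<in> NC_with_block {Max S} (S - {Max S})" using P e unfolding NC_with_block_def by auto
    qed
  qed
  then have "nc_sum2 g1 g2 S = (\<Sum>P\<in>NC_with_block {Max S} (S - {Max S}). nc_weight g1 g2 P)" by (simp add: nc_sum2_def)
  also have "\<dots> = block_sum g2 (nc_sum g1) (nc_sum2 g1 g2) {Max S} (S - {Max S})"
    using assms Max_ge[OF assms(1)] by (intro sum_NC_with_block) (auto simp: le_less)
  finally show ?thesis .
qed

lemma nc_sum_block_sum: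
  assumes "finite S" "S \<noteq> {}"
  shows "nc_sum g S = block_sum g (nc_sum g) (nc_sum g) {Max S} (S - {Max S})"
proof -
  have e: "nc_sum2 g g = nc_sum g" by (rule ext) (simp add: nc_sum_def)
  show ?thesis using nc_sum2_block_sum[OF assms, of g g] unfolding e by (simp add: e)
qed

section \<open>Inner and outer Boolean weights give a free convolution power\<close>

lemma sum_Pow_split_Max:
  fixes H :: "nat set"
  assumes "finite H"
  shows "(\<Sum>W\<in>Pow H. f W) = f {} + (\<Sum>y\<in>H. \<Sum>W'\<in>Pow (H \<inter> {..<y}). f (insert y W'))"
proof -
  let ?A = "\<lambda>y. insert y ` Pow (H \<inter> {..<y})"
  have eq: "Pow H - {{}} = (\<Union>y\<in>H. ?A y)"
  proof
    show "Pow H - {{}} \<subseteq> (\<Union>y\<in>H. ?A y)"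
    proof
      fix W assume W: "W \<in> Pow H - {{}}"
      then have fW: "finite W" "W \<noteq> {}" using assms finite_subset by auto
      have M: "Max W \<in> W" "Max W \<in> H" using Max_in[OF fW] W by auto
      have "W = insert (Max W) (W - {Max W})" using M by auto
      moreover have "W - {Max W} \<in> Pow (H \<inter> {..<Max W})"
        using W Max_ge[OF fW(1)] by (auto simp: le_less)
      ultimately show "W \<in> (\<Union>y\<in>H. ?A y)" using M by blast
    qed
  qed auto
  have disj: "?A y \<inter> ?A z = {}" if "y \<noteq> z" for y z
  proof (rule ccontr)
    assume "?A y \<inter> ?A z \<noteq> {}"
    then obtain U V where "U \<in> Pow (H \<inter> {..<y})" "V \<in> Pow (H \<inter> {..<z})" "insert y U = insert z V"
      by blast
    then have "z < y" "y < z" using that by (auto simp: insert_eq_iff)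
    then show False by simp
  qed
  have inj: "inj_on (insert y) (Pow (H \<inter> {..<y}))" for y
    by (rule inj_onI) (metis Int_iff PowD insert_ident lessThan_iff order_less_irrefl subset_iff)
  have "(\<Sum>W\<in>Pow H. f W) = f {} + (\<Sum>W\<in>Pow H - {{}}. f W)"
    using assms by (intro sum.remove) auto
  also have "(\<Sum>W\<in>Pow H - {{}}. f W) = (\<Sum>y\<in>H. \<Sum>W\<in>?A y. f W)"
    unfolding eq by (rule sum.UNION_disjoint) (use assms disj in auto)
  also have "\<dots> = (\<Sum>y\<in>H. \<Sum>W'\<in>Pow (H \<inter> {..<y}). f (insert y W'))"
    by (rule sum.cong[OF refl], rule sum.reindex[OF inj, unfolded comp_def])
  finally show ?thesis .
qed

lemma less_Max_if_mem_Diff: "finite H \<Longrightarrow> x \<in> H - {Max H} \<Longrightarrow> x < Max H"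
  using Max_ge[of H x] by (auto simp: le_less)

lemma Max_insert_below: "finite U \<Longrightarrow> \<forall>x\<in>U. x < y \<Longrightarrow> Max (insert y U) = y"
  by (intro Max_eqI) auto

text \<open>Think of \<open>r\<close> as the free cumulants of \<open>\<phi>\<close>: then \<open>bool_weight\<close> is its Boolean cumulant,
  \<open>Psi_sum\<close> the moment of \<open>\<Psi>\<^sub>t\<close> and \<open>free_pow_sum\<close> the moment of the \<open>(1 + t)\<close>-th free
  convolution power.\<close>

locale bn_weights =
  fixes r :: set_weight and t :: complex
begin

abbreviation "free_pow_sum \<equiv> nc_sum (\<lambda>V. (1 + t) * r V)"
abbreviation "bool_weight \<equiv> irreducible_sum r (nc_sum r)"
abbreviation "Psi_sum \<equiv> nc_sum (\<lambda>V. t * bool_weight V)"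
abbreviation "gap_Psi_sum \<equiv> gap_sum (nc_sum r) Psi_sum Psi_sum"

definition top_block_sum :: "nat set \<Rightarrow> complex" where
  "top_block_sum K = block_sum r free_pow_sum free_pow_sum {Max K} (K - {Max K})"

lemma free_pow_sum_top_block: "finite K \<Longrightarrow> K \<noteq> {} \<Longrightarrow> free_pow_sum K = (1 + t) * top_block_sum K"
  unfolding top_block_sum_def by (simp add: nc_sum_block_sum block_sum_scale)

lemma Psi_sum_top_block:
  assumes "finite H" "H \<noteq> {}"
  shows "Psi_sum H = t * block_sum r gap_Psi_sum Psi_sum {Max H} (H - {Max H})"
proof -
  have "Psi_sum H = block_sum (\<lambda>V. t * bool_weight V) Psi_sum Psi_sum {Max H} (H - {Max H})"
    by (rule nc_sum_block_sum[OF assms])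
  also have "\<dots> = t * block_sum bool_weight Psi_sum Psi_sum {Max H} (H - {Max H})"
    using assms by (simp add: block_sum_scale)
  also have "block_sum bool_weight Psi_sum Psi_sum {Max H} (H - {Max H}) =
             block_sum r gap_Psi_sum Psi_sum {Max H} (H - {Max H})"
    using assms less_Max_if_mem_Diff by (intro block_sum_irreducible_sum) auto
  finally show ?thesis .
qed

lemma gap_Psi_sum_rec:
  assumes "finite H"
  shows "gap_Psi_sum H = Psi_sum H + (\<Sum>y\<in>H. Psi_sum (H \<inter> {y<..}) * block_sum r gap_Psi_sum gap_Psi_sum {y} (H \<inter> {..<y}))"
proof -
  have split: "gap_Psi_sum H = nc_sum r {} * gap_prod Psi_sum Psi_sum {} H +
      (\<Sum>y\<in>H. \<Sum>W\<in>Pow (H \<inter> {..<y}). nc_sum r (insert y W) * gap_prod Psi_sum Psi_sum (insert y W) H)"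
    unfolding gap_sum_def by (rule sum_Pow_split_Max[OF assms])
  have step: "(\<Sum>W\<in>Pow (H \<inter> {..<y}). nc_sum r (insert y W) * gap_prod Psi_sum Psi_sum (insert y W) H) =
      Psi_sum (H \<inter> {y<..}) * block_sum r gap_Psi_sum gap_Psi_sum {y} (H \<inter> {..<y})" if y: "y \<in> H" for y
  proof -
    have "nc_sum r (insert y W) * gap_prod Psi_sum Psi_sum (insert y W) H =
          Psi_sum (H \<inter> {y<..}) * (block_sum r (nc_sum r) (nc_sum r) {y} W * gap_prod Psi_sum Psi_sum W (H \<inter> {..<y}))"
      if W: "W \<in> Pow (H \<inter> {..<y})" for W
    proof -
      have fW: "finite (insert y W)" using W assms finite_subset by auto
      have M: "Max (insert y W) = y" using W fW by (intro Max_insert_below) auto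
      have D: "insert y W - {y} = W" using W by auto
      show ?thesis using nc_sum_block_sum[OF fW] gap_prod_Max[OF fW] M D by simp
    qed
    then have "(\<Sum>W\<in>Pow (H \<inter> {..<y}). nc_sum r (insert y W) * gap_prod Psi_sum Psi_sum (insert y W) H) =
        Psi_sum (H \<inter> {y<..}) * (\<Sum>W\<in>Pow (H \<inter> {..<y}).
          block_sum r (nc_sum r) (nc_sum r) {y} W * gap_prod Psi_sum Psi_sum W (H \<inter> {..<y}))"
      by (simp add: sum_distrib_left)
    then show ?thesis
      using block_sum_gap_sum[of "H \<inter> {..<y}" r "nc_sum r" "nc_sum r" "{y}" Psi_sum Psi_sum] assms
      by simp
  qed
  have "nc_sum r {} * gap_prod Psi_sum Psi_sum {} H = Psi_sum H"
    by (simp add: nc_sum_empty gap_prod_empty)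
  moreover have "(\<Sum>y\<in>H. \<Sum>W\<in>Pow (H \<inter> {..<y}). nc_sum r (insert y W) * gap_prod Psi_sum Psi_sum (insert y W) H) =
      (\<Sum>y\<in>H. Psi_sum (H \<inter> {y<..}) * block_sum r gap_Psi_sum gap_Psi_sum {y} (H \<inter> {..<y}))"
    by (rule sum.cong[OF refl step])
  ultimately show ?thesis using split by (simp only:)
qed

text \<open>The next three lemmas are the inductive step of \<open>gap_Psi_sum_eq_free_pow_sum\<close>, with
  the induction hypothesis as the assumption \<open>\<forall>W\<subset>H. \<dots>\<close>.\<close>

lemma gap_block_sum_top_block:
  assumes "finite H" "\<forall>W\<subset>H. gap_Psi_sum W = free_pow_sum W" "K \<subseteq> H" "y \<in> K"
  shows "block_sum r gap_Psi_sum gap_Psi_sum {y} (K \<inter> {..<y}) = top_block_sum (K \<inter> {..y})"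
proof -
  have "Max (K \<inter> {..y}) = y" using assms(1,3,4) finite_subset by (intro Max_eqI) auto
  moreover have "K \<inter> {..y} - {y} = K \<inter> {..<y}" by auto
  moreover have "block_sum r gap_Psi_sum gap_Psi_sum {y} (K \<inter> {..<y}) =
                 block_sum r free_pow_sum free_pow_sum {y} (K \<inter> {..<y})"
  proof (rule block_sum_cong)
    show "finite (K \<inter> {..<y})" using assms(1,3) finite_subset by auto
    fix W assume "W \<subseteq> K \<inter> {..<y}"
    then have "W \<subset> H" using assms(3,4) by auto
    then show "gap_Psi_sum W = free_pow_sum W" "gap_Psi_sum W = free_pow_sum W" using assms(2) by simp_all
  qed simp
  ultimately show ?thesis by (simp add: top_block_sum_def)
qed

lemma Psi_sum_top_block_free_pow:
  assumes "finite H" "\<forall>W\<subset>H. gap_Psi_sum W = free_pow_sum W" "K \<subseteq> H" "K \<noteq> {}"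
  shows "Psi_sum K = t * block_sum r free_pow_sum Psi_sum {Max K} (K - {Max K})"
proof -
  have fK: "finite K" using assms(1,3) finite_subset by auto
  have "block_sum r gap_Psi_sum Psi_sum {Max K} (K - {Max K}) =
        block_sum r free_pow_sum Psi_sum {Max K} (K - {Max K})"
  proof (rule block_sum_cong)
    show "finite (K - {Max K})" using fK by simp
    fix W assume "W \<subseteq> K - {Max K}"
    moreover have "Max K \<in> K" using Max_in[OF fK assms(4)] .
    ultimately have "W \<subset> H" using assms(3) by auto
    then show "gap_Psi_sum W = free_pow_sum W" using assms(2) by simp
  qed simp_all
  then show ?thesis using Psi_sum_top_block[OF fK assms(4)] by simp
qed

lemma sum_Psi_sum_top_block:
  assumes "finite H" "H \<noteq> {}" "\<forall>W\<subset>H. gap_Psi_sum W = free_pow_sum W"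
  shows "(\<Sum>y\<in>H - {Max H}. Psi_sum (H \<inter> {y<..}) * top_block_sum (H \<inter> {..y})) =
    t * (top_block_sum H - block_sum r free_pow_sum Psi_sum {Max H} (H - {Max H}))"
proof -
  define M where "M = Max H"
  define H' where "H' = H - {M}"
  have MH: "M \<in> H" using Max_in[OF assms(1,2)] M_def by simp
  have fH': "finite H'" using assms(1) H'_def by simp
  have H'lt: "x < M" if "x \<in> H'" for x using less_Max_if_mem_Diff[OF assms(1)] that M_def H'_def by simp
  have tail: "free_pow_sum I - Psi_sum I = (\<Sum>y\<in>I. Psi_sum (I \<inter> {y<..}) * top_block_sum (I \<inter> {..y}))"
    if I: "I \<subseteq> H'" for I
  proof -
    have IH: "I \<subset> H" using I MH H'_def by auto
    have "free_pow_sum I = gap_Psi_sum I" using IH assms(3) by simp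
    also have "\<dots> = Psi_sum I + (\<Sum>y\<in>I. Psi_sum (I \<inter> {y<..}) * top_block_sum (I \<inter> {..y}))"
      using gap_Psi_sum_rec[OF finite_subset[OF _ fH' ]] gap_block_sum_top_block[OF assms(1,3)] I IH
      by (simp cong: sum.cong)
    finally show ?thesis by simp
  qed
  have "Psi_sum (H \<inter> {y<..}) * top_block_sum (H \<inter> {..y}) =
        t * (top_block_sum (H' \<inter> {..y}) * block_sum r free_pow_sum Psi_sum {M} (H' \<inter> {y<..}))"
    if y: "y \<in> H'" for y
  proof -
    have K: "H \<inter> {y<..} \<subseteq> H" "H \<inter> {y<..} \<noteq> {}" using MH H'lt[OF y] by auto
    have "Max (H \<inter> {y<..}) = M" using MH H'lt[OF y] Max_ge[OF assms(1)] M_def assms(1)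
      by (intro Max_eqI) auto
    moreover have "H \<inter> {y<..} - {M} = H' \<inter> {y<..}" "H \<inter> {..y} = H' \<inter> {..y}"
      using H'lt[OF y] H'_def by auto
    ultimately show ?thesis using Psi_sum_top_block_free_pow[OF assms(1,3) K] by simp
  qed
  then have "(\<Sum>y\<in>H'. Psi_sum (H \<inter> {y<..}) * top_block_sum (H \<inter> {..y})) =
      t * (\<Sum>y\<in>H'. top_block_sum (H' \<inter> {..y}) * block_sum r free_pow_sum Psi_sum {M} (H' \<inter> {y<..}))"
    by (simp add: sum_distrib_left)
  also have "(\<Sum>y\<in>H'. top_block_sum (H' \<inter> {..y}) * block_sum r free_pow_sum Psi_sum {M} (H' \<inter> {y<..})) =
      block_sum r free_pow_sum (\<lambda>I. free_pow_sum I - Psi_sum I) {M} H'"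
    by (rule block_sum_tail_split[OF fH', symmetric]) (rule tail)
  also have "\<dots> = top_block_sum H - block_sum r free_pow_sum Psi_sum {M} H'"
    using block_sum_diff[OF fH', of r free_pow_sum free_pow_sum Psi_sum "{M}"]
    by (simp add: top_block_sum_def M_def H'_def)
  finally show ?thesis by (simp add: M_def H'_def)
qed

lemma gap_Psi_sum_eq_free_pow_sum: "finite H \<Longrightarrow> gap_Psi_sum H = free_pow_sum H"
proof (induction "card H" arbitrary: H rule: less_induct)
  case less
  show ?case
  proof (cases "H = {}")
    case True then show ?thesis using gap_Psi_sum_rec[of "{}"] by (simp add: nc_sum_empty)
  next
    case False
    have IH: "\<forall>W\<subset>H. gap_Psi_sum W = free_pow_sum W"
      using less psubset_card_mono finite_subset by (metis psubset_imp_subset)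
    define M where "M = Max H"
    have MH: "M \<in> H" using Max_in[OF less.prems False] M_def by simp
    have "gap_Psi_sum H = Psi_sum H + (\<Sum>y\<in>H. Psi_sum (H \<inter> {y<..}) * top_block_sum (H \<inter> {..y}))"
      using gap_Psi_sum_rec[OF less.prems] gap_block_sum_top_block[OF less.prems IH] by simp
    also have "(\<Sum>y\<in>H. Psi_sum (H \<inter> {y<..}) * top_block_sum (H \<inter> {..y})) =
        Psi_sum (H \<inter> {M<..}) * top_block_sum (H \<inter> {..M}) +
        (\<Sum>y\<in>H - {M}. Psi_sum (H \<inter> {y<..}) * top_block_sum (H \<inter> {..y}))"
      by (rule sum.remove[OF less.prems MH])
    finally have "gap_Psi_sum H = Psi_sum H + (Psi_sum (H \<inter> {M<..}) * top_block_sum (H \<inter> {..M}) +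
        (\<Sum>y\<in>H - {M}. Psi_sum (H \<inter> {y<..}) * top_block_sum (H \<inter> {..y})))" .
    moreover have "H \<inter> {M<..} = {}" "H \<inter> {..M} = H"
      using Max_ge[OF less.prems] M_def by (auto simp: not_less[symmetric])
    ultimately show ?thesis
      using sum_Psi_sum_top_block[OF less.prems False IH] Psi_sum_top_block_free_pow[OF less.prems IH _ False]
        free_pow_sum_top_block[OF less.prems False]
      by (simp add: M_def nc_sum_empty algebra_simps)
  qed
qed

lemma nc_sum2_bool_weight:
  "finite H \<Longrightarrow> nc_sum2 (\<lambda>V. t * bool_weight V) (\<lambda>V. (1 + t) * bool_weight V) H = free_pow_sum H"
proof (induction "card H" arbitrary: H rule: less_induct)
  case less
  show ?case
  proof (cases "H = {}")
    case True then show ?thesis by (simp add: nc_sum2_empty nc_sum_empty)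
  next
    case False
    define M where "M = Max H"
    define H' where "H' = H - {M}"
    have MH: "M \<in> H" using Max_in[OF less.prems False] M_def by simp
    have fH': "finite H'" using less.prems H'_def by simp
    let ?Phi = "nc_sum2 (\<lambda>V. t * bool_weight V) (\<lambda>V. (1 + t) * bool_weight V)"
    have "?Phi H = block_sum (\<lambda>V. (1 + t) * bool_weight V) Psi_sum ?Phi {M} H'"
      unfolding M_def H'_def by (rule nc_sum2_block_sum[OF less.prems False])
    also have "\<dots> = (1 + t) * block_sum bool_weight Psi_sum ?Phi {M} H'"
      using fH' by (simp add: block_sum_scale)
    also have "block_sum bool_weight Psi_sum ?Phi {M} H' = block_sum r gap_Psi_sum ?Phi {M} H'"
      using fH' less_Max_if_mem_Diff[OF less.prems] M_def H'_def by (intro block_sum_irreducible_sum) auto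
    also have "\<dots> = top_block_sum H"
      unfolding top_block_sum_def M_def[symmetric] H'_def[symmetric]
    proof (rule block_sum_cong[OF fH'])
      fix W assume W: "W \<subseteq> H'"
      have fW: "finite W" using W fH' finite_subset by auto
      show "gap_Psi_sum W = free_pow_sum W" by (rule gap_Psi_sum_eq_free_pow_sum[OF fW])
      have "W \<subset> H" using W MH H'_def by auto
      then have "card W < card H" using psubset_card_mono[OF less.prems] by blast
      then show "?Phi W = free_pow_sum W" using less.hyps fW by blast
    qed simp
    finally show ?thesis using free_pow_sum_top_block[OF less.prems False] by simp
  qed
qed

end

section \<open>Boolean cumulants as irreducible sums\<close>

lemma irreducible_sum_atLeastLessThan_Suc:
  "j \<le> m \<Longrightarrow> irreducible_sum g G {j..<Suc m} = block_sum g G delta_empty {m} {j..<m}"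
proof -
  assume "j \<le> m"
  then have "Max {j..<Suc m} = m" by (intro Max_eqI) auto
  moreover have "{j..<Suc m} - {m} = {j..<m}" by auto
  ultimately show ?thesis by (simp add: irreducible_sum_def)
qed

lemma nc_sum2_last_irreducible:
  "nc_sum2 g1 g2 {..<Suc m} =
   (\<Sum>j<Suc m. nc_sum2 g1 g2 {..<j} * irreducible_sum g2 (nc_sum g1) {j..<Suc m})"
proof -
  have "Max {..<Suc m} = m" by (intro Max_eqI) auto
  moreover have "{..<Suc m} - {m} = {..<m}" by auto
  moreover have "{..<Suc m} \<noteq> {}" by auto
  ultimately have "nc_sum2 g1 g2 {..<Suc m} = block_sum g2 (nc_sum g1) (nc_sum2 g1 g2) {m} {..<m}"
    using nc_sum2_block_sum[of "{..<Suc m}" g1 g2] by (simp del: lessThan_Suc)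
  also have "\<dots> = nc_sum2 g1 g2 {..<m} * g2 {m} +
      (\<Sum>j<m. nc_sum2 g1 g2 {..<j} * block_sum g2 (nc_sum g1) delta_empty {m} {j..<m})"
  proof -
    have "nc_sum2 g1 g2 ({..<m} \<inter> {..<j}) * block_sum g2 (nc_sum g1) delta_empty {m} ({..<m} \<inter> {j..}) =
          nc_sum2 g1 g2 {..<j} * block_sum g2 (nc_sum g1) delta_empty {m} {j..<m}" if "j < m" for j
    proof -
      have "{..<m} \<inter> {..<j} = {..<j}" "{..<m} \<inter> {j..} = {j..<m}" using that by auto
      then show ?thesis by simp
    qed
    then show ?thesis using block_sum_head_split[of "{..<m}" g2 "nc_sum g1" "nc_sum2 g1 g2" "{m}"]
      by simp
  qed
  also have "\<dots> = (\<Sum>j<Suc m. nc_sum2 g1 g2 {..<j} * irreducible_sum g2 (nc_sum g1) {j..<Suc m})"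
    by (simp add: irreducible_sum_atLeastLessThan_Suc block_sum_empty delta_empty_def add.commute)
  finally show ?thesis .
qed

lemma nc_sum2_interval_decomposition:
  "nc_sum2 g1 g2 {..<n} = (\<Sum>P\<in>interval_partitions n. \<Prod>V\<in>P. irreducible_sum g2 (nc_sum g1) V)"
proof (induction n rule: less_induct)
  case (less n)
  show ?case
  proof (cases n)
    case 0 then show ?thesis by (simp add: nc_sum2_empty interval_partitions_0)
  next
    case (Suc m)
    then show ?thesis
      using nc_sum2_last_irreducible[of g1 g2 m] less.IH
        sum_interval_partitions_last_block[of n "irreducible_sum g2 (nc_sum g1)"]
      by simp
  qed
qed

lemma strict_mono_on_image_Int_greaterThan:
  fixes e :: "'a::linorder \<Rightarrow> 'b::linorder"
  shows   "strict_mono_on D e \<Longrightarrow> S \<subseteq> D \<Longrightarrow> y \<in> D \<Longrightarrow> e ` (S \<inter> {y<..}) = e ` S \<inter> {e y<..}"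
  using strict_mono_on_less[of D e] by auto

lemma strict_mono_on_image_Int_lessThan:
  fixes e :: "'a::linorder \<Rightarrow> 'b::linorder"
  shows   "strict_mono_on D e \<Longrightarrow> S \<subseteq> D \<Longrightarrow> y \<in> D \<Longrightarrow> e ` (S \<inter> {..<y}) = e ` S \<inter> {..<e y}"
  using strict_mono_on_less[of D e] by auto

lemma strict_mono_on_Max_image:
  fixes e :: "'a::linorder \<Rightarrow> 'b::linorder"
  assumes "strict_mono_on D e" "S \<subseteq> D" "finite S" "S \<noteq> {}"
  shows "Max (e ` S) = e (Max S)"
proof (rule Max_eqI)
  fix z assume "z \<in> e ` S"
  then obtain x where "x \<in> S" "z = e x" by blast
  then show "z \<le> e (Max S)"
    using Max_ge[OF assms(3)] strict_mono_on_less_eq[OF assms(1)] Max_in[OF assms(3,4)] assms(2) by blast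
qed (use assms Max_in in auto)

lemma block_sum_relabel:
  assumes "strict_mono_on D e" "finite S" "B \<union> S \<subseteq> D"
    and "\<And>X. X \<subseteq> D \<Longrightarrow> g X = g' (e ` X)" "\<And>X. X \<subseteq> S \<Longrightarrow> G X = G' (e ` X)"
    and "\<And>X. X \<subseteq> S \<Longrightarrow> T X = T' (e ` X)"
  shows "block_sum g G T B S = block_sum g' G' T' (e ` B) (e ` S)"
  using assms(2,3,5,6)
proof (induction "card S" arbitrary: S B rule: less_induct)
  case less
  have inj: "inj_on e S"
    using strict_mono_on_imp_inj_on[OF assms(1)] less.prems(2) inj_on_subset by blast
  have "block_sum g G T B S =
      g B * T S + (\<Sum>y\<in>S. G (S \<inter> {y<..}) * block_sum g G T (insert y B) (S \<inter> {..<y}))"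
    by (rule block_sum_rec[OF less.prems(1)])
  also have "\<dots> = g' (e ` B) * T' (e ` S) +
      (\<Sum>y\<in>S. G' (e ` S \<inter> {e y<..}) * block_sum g' G' T' (insert (e y) (e ` B)) (e ` S \<inter> {..<e y}))"
  proof -
    have "G (S \<inter> {y<..}) * block_sum g G T (insert y B) (S \<inter> {..<y}) =
        G' (e ` S \<inter> {e y<..}) * block_sum g' G' T' (insert (e y) (e ` B)) (e ` S \<inter> {..<e y})"
      if y: "y \<in> S" for y
    proof -
      have "block_sum g G T (insert y B) (S \<inter> {..<y}) =
            block_sum g' G' T' (e ` insert y B) (e ` (S \<inter> {..<y}))"
        by (rule less.hyps[OF card_below_less[OF less.prems(1) y]]) (use less.prems y in auto)
      moreover have "S \<subseteq> D" "y \<in> D" using less.prems(2) y by auto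
      ultimately show ?thesis
        using less.prems(3) strict_mono_on_image_Int_greaterThan[OF assms(1)]
          strict_mono_on_image_Int_lessThan[OF assms(1)] by simp
    qed
    moreover have "g B = g' (e ` B)" "T S = T' (e ` S)" using assms(4) less.prems(2,4) by auto
    ultimately show ?thesis by simp
  qed
  also have "(\<Sum>y\<in>S. G' (e ` S \<inter> {e y<..}) * block_sum g' G' T' (insert (e y) (e ` B)) (e ` S \<inter> {..<e y})) =
      (\<Sum>y\<in>e ` S. G' (e ` S \<inter> {y<..}) * block_sum g' G' T' (insert y (e ` B)) (e ` S \<inter> {..<y}))"
    by (rule sum.reindex[OF inj, unfolded comp_def, symmetric])
  also have "g' (e ` B) * T' (e ` S) + \<dots> = block_sum g' G' T' (e ` B) (e ` S)"
    by (rule block_sum_rec[symmetric]) (use less.prems(1) in simp)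
  finally show ?case .
qed

lemma nc_sum_relabel:
  assumes "strict_mono_on D e" "finite S" "S \<subseteq> D" "\<And>X. X \<subseteq> D \<Longrightarrow> g X = g' (e ` X)"
  shows "nc_sum g S = nc_sum g' (e ` S)"
  using assms(2,3)
proof (induction "card S" arbitrary: S rule: less_induct)
  case less
  show ?case
  proof (cases "S = {}")
    case True then show ?thesis by (simp add: nc_sum_empty)
  next
    case False
    define M where "M = Max S"
    have MS: "M \<in> S" using Max_in[OF less.prems(1) False] M_def by simp
    have eM: "Max (e ` S) = e M"
      using strict_mono_on_Max_image[OF assms(1) less.prems(2,1) False] M_def by simp
    have eD: "e ` (S - {M}) = e ` S - {e M}"
      using strict_mono_on_imp_inj_on[OF assms(1)] less.prems(2) MS by (auto simp: inj_on_def)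
    have "nc_sum g S = block_sum g (nc_sum g) (nc_sum g) {M} (S - {M})"
      unfolding M_def by (rule nc_sum_block_sum[OF less.prems(1) False])
    also have "\<dots> = block_sum g' (nc_sum g') (nc_sum g') (e ` {M}) (e ` (S - {M}))"
    proof (rule block_sum_relabel[OF assms(1)])
      fix X assume X: "X \<subseteq> S - {M}"
      then have "card X < card S" "finite X" "X \<subseteq> D"
        using MS less.prems psubset_card_mono[of S X] finite_subset[of X S] by auto
      then show "nc_sum g X = nc_sum g' (e ` X)" "nc_sum g X = nc_sum g' (e ` X)"
        using less.hyps by auto
    qed (use less.prems MS assms(4) in auto)
    also have "\<dots> = nc_sum g' (e ` S)"
      using nc_sum_block_sum[of "e ` S" g'] less.prems(1) False eM eD by simp
    finally show ?thesis .
  qed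
qed

lemma irreducible_sum_relabel:
  assumes "strict_mono_on D e" "finite K" "K \<subseteq> D" "K \<noteq> {}"
    and "\<And>X. X \<subseteq> D \<Longrightarrow> g X = g' (e ` X)" "\<And>X. X \<subseteq> D \<Longrightarrow> h X = h' (e ` X)"
  shows "irreducible_sum g (nc_sum h) K = irreducible_sum g' (nc_sum h') (e ` K)"
proof -
  define M where "M = Max K"
  have MK: "M \<in> K" using Max_in[OF assms(2,4)] M_def by simp
  have eM: "Max (e ` K) = e M" using strict_mono_on_Max_image[OF assms(1,3,2,4)] M_def by simp
  have eD: "e ` (K - {M}) = e ` K - {e M}"
    using strict_mono_on_imp_inj_on[OF assms(1)] assms(3) MK by (auto simp: inj_on_def)
  have "block_sum g (nc_sum h) delta_empty {M} (K - {M}) =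
        block_sum g' (nc_sum h') delta_empty (e ` {M}) (e ` (K - {M}))"
  proof (rule block_sum_relabel[OF assms(1)])
    fix X assume X: "X \<subseteq> K - {M}"
    then have "finite X" "X \<subseteq> D" using assms(2,3) by (auto intro: finite_subset)
    then show "nc_sum h X = nc_sum h' (e ` X)" using nc_sum_relabel[OF assms(1)] assms(6) by blast
    show "delta_empty X = delta_empty (e ` X)" by (simp add: delta_empty_def)
  qed (use assms MK in auto)
  then show ?thesis unfolding irreducible_sum_def M_def[symmetric] eM eD[symmetric] by simp
qed

text \<open>\<open>rank V\<close> turns index sets of \<open>xs\<close> inside \<open>V\<close> into index sets of the subword \<open>nths xs V\<close>.\<close>

definition rank :: "nat set \<Rightarrow> nat \<Rightarrow> nat" where
  "rank V i = card {j\<in>V. j < i}"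

lemma strict_mono_on_rank: "finite V \<Longrightarrow> strict_mono_on V (rank V)"
  unfolding rank_def by (rule strict_mono_onI, rule psubset_card_mono) auto

lemma rank_image: "finite V \<Longrightarrow> rank V ` V = {..<card V}"
proof -
  assume fV: "finite V"
  have sub: "rank V ` V \<subseteq> {..<card V}"
    using fV by (auto simp: rank_def intro!: psubset_card_mono)
  have "card (rank V ` V) = card V"
    using card_image[OF strict_mono_on_imp_inj_on[OF strict_mono_on_rank[OF fV]]] .
  then show ?thesis using card_subset_eq[OF finite_lessThan sub] by simp
qed

lemma nths_nths_rank: "W \<subseteq> V \<Longrightarrow> finite V \<Longrightarrow> nths (nths xs V) (rank V ` W) = nths xs W"
proof -
  assume a: "W \<subseteq> V" "finite V"
  have inj: "inj_on (rank V) V" using strict_mono_on_imp_inj_on[OF strict_mono_on_rank[OF a(2)]] .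
  have "{i \<in> V. \<exists>j\<in>rank V ` W. card {i' \<in> V. i' < i} = j} = W"
    using a inj unfolding rank_def inj_on_def by blast
  then show ?thesis by (simp add: nths_nths)
qed

definition irreducible_sum_list :: "('a list \<Rightarrow> complex) \<Rightarrow> ('a list \<Rightarrow> complex) \<Rightarrow> 'a list \<Rightarrow> complex" where
  "irreducible_sum_list Fo Fi es =
     irreducible_sum (\<lambda>W. Fo (nths es W)) (nc_sum (\<lambda>W. Fi (nths es W))) {..<length es}"

lemma irreducible_sum_nths:
  assumes "V \<subseteq> {..<length xs}" "V \<noteq> {}"
  shows "irreducible_sum (\<lambda>W. Fo (nths xs W)) (nc_sum (\<lambda>W. Fi (nths xs W))) V =
         irreducible_sum_list Fo Fi (nths xs V)"
proof -
  have fV: "finite V" using assms(1) finite_subset by blast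
  have "irreducible_sum (\<lambda>W. Fo (nths xs W)) (nc_sum (\<lambda>W. Fi (nths xs W))) V =
        irreducible_sum (\<lambda>W. Fo (nths (nths xs V) W)) (nc_sum (\<lambda>W. Fi (nths (nths xs V) W))) (rank V ` V)"
    by (rule irreducible_sum_relabel[OF strict_mono_on_rank[OF fV] fV subset_refl assms(2)])
       (simp_all add: nths_nths_rank fV)
  then show ?thesis
    using rank_image[OF fV] length_nths_subset[OF assms(1)] by (simp add: irreducible_sum_list_def)
qed

lemma irreducible_sum_list_scale:
  "irreducible_sum_list (\<lambda>l. c * F l) G es = c * irreducible_sum_list F G es"
  unfolding irreducible_sum_list_def irreducible_sum_def by (rule block_sum_scale) simp

lemma bool_cum_irreducible_sum_list:
  assumes "es \<in> lists A" "es \<noteq> []"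
    and "\<And>ds. ds \<in> lists A \<Longrightarrow> ds \<noteq> [] \<Longrightarrow>
           m ds = nc_sum2 (\<lambda>W. Fi (nths ds W)) (\<lambda>W. Fo (nths ds W)) {..<length ds}"
  shows "bool_cum m es = irreducible_sum_list Fo Fi es"
proof (rule bool_cum_eqI[OF assms(1,2)])
  fix ds assume ds: "ds \<in> lists A" "ds \<noteq> []"
  have "irreducible_sum (\<lambda>W. Fo (nths ds W)) (nc_sum (\<lambda>W. Fi (nths ds W))) V =
        irreducible_sum_list Fo Fi (nths ds V)" if "P \<in> interval_partitions (length ds)" "V \<in> P" for P V
    using that partition_on_interval_partitions
    by (intro irreducible_sum_nths) (auto simp: partition_on_def)
  then show "m ds = (\<Sum>P\<in>interval_partitions (length ds). \<Prod>V\<in>P. irreducible_sum_list Fo Fi (nths ds V))"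
    unfolding assms(3)[OF ds] nc_sum2_interval_decomposition by (auto intro!: sum.cong prod.cong)
qed

lemma nc_sum2_cong:
  assumes "finite S" "\<And>V. V \<subseteq> S \<Longrightarrow> V \<noteq> {} \<Longrightarrow> g1 V = g1' V"
    "\<And>V. V \<subseteq> S \<Longrightarrow> V \<noteq> {} \<Longrightarrow> g2 V = g2' V"
  shows "nc_sum2 g1 g2 S = nc_sum2 g1' g2' S"
  unfolding nc_sum2_def nc_weight_def
proof (intro sum.cong refl arg_cong2[where f="(*)"] prod.cong)
  fix P V assume P: "P \<in> NC_on S"
  have p: "partition_on S P" using NC_onD(1)[OF P] .
  { assume "V \<in> inner_blocks P"
    then have "V \<in> P" using inner_blocks_subset by blast
    then show "g1 V = g1' V" using assms(2) partition_onE(1,3)[OF p] by blast }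
  { assume "V \<in> outer_blocks P"
    then have "V \<in> P" by (simp add: outer_blocks_def)
    then show "g2 V = g2' V" using assms(3) partition_onE(1,3)[OF p] by blast }
qed

lemma NC_0: "NC 0 = {{}}"
  by (auto simp: NC_def partition_on_empty noncrossing_def)

lemma nc_sum_lessThan: "nc_sum g {..<n} = (\<Sum>P\<in>NC n. \<Prod>V\<in>P. g V)"
  by (simp add: nc_sum_prod NC_on_lessThan)

section \<open>Distributions\<close>

lemma joint_distr_apply: "joint_distr m xs w = m (map (\<lambda>i. xs ! i) w)"
  by (simp add: joint_distr_def)

lemma bool_cum_joint_distr: "bool_cum (joint_distr M fs) w = bool_cum M (map (\<lambda>i. fs ! i) w)"
proof (cases "w = []")
  case True then show ?thesis by (simp add: bool_cum_Nil)
next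
  case False
  show ?thesis
  proof (rule bool_cum_eqI[where A = UNIV, OF _ False])
    fix bs :: "nat list" assume "bs \<noteq> []"
    then show "joint_distr M fs bs = (\<Sum>P\<in>interval_partitions (length bs).
        \<Prod>V\<in>P. bool_cum M (map (\<lambda>i. fs ! i) (nths bs V)))"
      using bool_cum_formula[of "map (\<lambda>i. fs ! i) bs" M] by (simp add: joint_distr_apply nths_map)
  qed simp
qed

lemma free_cum_joint_distr: "free_cum (joint_distr M fs) w = free_cum M (map (\<lambda>i. fs ! i) w)"
proof (cases "w = []")
  case True then show ?thesis by (simp add: free_cum_Nil)
next
  case False
  show ?thesis
  proof (rule free_cum_eqI[where A = UNIV, OF _ False])
    fix bs :: "nat list" assume "bs \<noteq> []"
    then show "joint_distr M fs bs = (\<Sum>P\<in>NC (length bs). \<Prod>V\<in>P. free_cum M (map (\<lambda>i. fs ! i) (nths bs V)))"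
      using free_cum_formula[of "map (\<lambda>i. fs ! i) bs" M] by (simp add: joint_distr_apply nths_map)
  qed simp
qed

lemma bool_cum_bool_pow: "bool_cum (bool_pow c M) w = of_real c * bool_cum M w"
proof (cases "w = []")
  case True then show ?thesis by (simp add: bool_cum_Nil)
next
  case False
  show ?thesis
  proof (rule bool_cum_eqI[where A = UNIV, OF _ False])
    fix bs :: "nat list"
    show "bool_pow c M bs = (\<Sum>P\<in>interval_partitions (length bs). \<Prod>V\<in>P. of_real c * bool_cum M (nths bs V))"
      unfolding bool_pow_def by (rule refl)
  qed simp
qed

context star_probability_space
begin

abbreviation phi_prod :: "'b list \<Rightarrow> complex" where
  "phi_prod \<equiv> \<lambda>as. phi (prod_list as)"

lemma phi_W_nths_irreducible_sum:
  assumes "cs \<in> lists {f. phi f = 0}" "V \<subseteq> {..<length cs}" "V \<noteq> {}"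
  shows "phi_W (nths cs V) =
    irreducible_sum (\<lambda>W. free_cum phi_prod (nths cs W)) (nc_sum (\<lambda>W. free_cum phi_prod (nths cs W))) V"
proof -
  have "bool_cum phi_prod (nths cs V) = irreducible_sum_list (free_cum phi_prod) (free_cum phi_prod) (nths cs V)"
  proof (rule bool_cum_irreducible_sum_list[OF nths_in_lists[OF assms(1)] nths_nonempty[OF assms(2,3)]])
    fix ds :: "'b list" assume "ds \<noteq> []"
    then show "phi_prod ds = nc_sum2 (\<lambda>W. free_cum phi_prod (nths ds W)) (\<lambda>W. free_cum phi_prod (nths ds W)) {..<length ds}"
      using free_cum_formula[of ds phi_prod] by (simp add: nc_sum_lessThan flip: nc_sum_def)
  qed
  then show ?thesis
    using bool_cum_phi[OF nths_in_lists[OF assms(1)] nths_nonempty[OF assms(2,3)]]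
      irreducible_sum_nths[OF assms(2,3)] by simp
qed

lemma Phi_t_nc_sum2:
  "bs \<noteq> [] \<Longrightarrow> Phi_t smul phi t bs =
    nc_sum2 (\<lambda>V. of_real t * phi_W (nths bs V)) (\<lambda>V. of_real (1 + t) * phi_W (nths bs V)) {..<length bs}"
  unfolding Phi_t_NC_sum nc_sum2_def nc_weight_def NC_on_lessThan ..

lemma Psi_t_nc_sum2:
  "bs \<noteq> [] \<Longrightarrow> Psi_t smul phi t bs =
    nc_sum2 (\<lambda>V. of_real t * phi_W (nths bs V)) (\<lambda>V. of_real t * phi_W (nths bs V)) {..<length bs}"
  by (simp add: Psi_t_NC_sum nc_sum_lessThan flip: nc_sum_def)

lemma Phi_t_free_pow:
  assumes "cs \<in> lists {f. phi f = 0}" "cs \<noteq> []"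
  shows "Phi_t smul phi t cs = (\<Sum>P\<in>NC (length cs). \<Prod>V\<in>P. of_real (1 + t) * free_cum phi_prod (nths cs V))"
proof -
  define r where "r = (\<lambda>W. free_cum phi_prod (nths cs W))"
  interpret bn_weights r "of_real t" .
  have "Phi_t smul phi t cs = nc_sum2 (\<lambda>V. of_real t * bool_weight V) (\<lambda>V. (1 + of_real t) * bool_weight V) {..<length cs}"
    unfolding Phi_t_nc_sum2[OF assms(2)]
    by (rule nc_sum2_cong) (simp_all add: phi_W_nths_irreducible_sum[OF assms(1)] r_def)
  also have "\<dots> = free_pow_sum {..<length cs}"
    by (rule nc_sum2_bool_weight) simp
  finally show ?thesis by (simp add: nc_sum_lessThan r_def)
qed

lemma bool_cum_Psi_t:
  assumes "es \<in> lists {f. phi f = 0}" "es \<noteq> []" "t \<ge> 0"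
  shows "bool_cum (Psi_t smul phi t) es = of_real (t / (1 + t)) * bool_cum (Phi_t smul phi t) es"
proof -
  have "bool_cum (Phi_t smul phi t) es = irreducible_sum_list (\<lambda>l. of_real (1 + t) * phi_W l) (\<lambda>l. of_real t * phi_W l) es"
    by (rule bool_cum_irreducible_sum_list[OF assms(1,2) Phi_t_nc_sum2])
  moreover have "bool_cum (Psi_t smul phi t) es = irreducible_sum_list (\<lambda>l. of_real t * phi_W l) (\<lambda>l. of_real t * phi_W l) es"
    by (rule bool_cum_irreducible_sum_list[OF assms(1,2) Psi_t_nc_sum2])
  moreover have "(1 + complex_of_real t) \<noteq> 0"
    using assms(3) by (metis of_real_1 of_real_add of_real_eq_0_iff add_nonneg_eq_0_iff zero_neq_one zero_le_one)
  ultimately show ?thesis unfolding irreducible_sum_list_scale by (simp add: field_simps)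
qed

lemma joint_distr_Psi_t_bool_pow_Phi_t:
  assumes "\<forall>f\<in>set fs. phi f = 0" "t \<ge> 0" "w \<in> lists {..<length fs}"
  shows "joint_distr (Psi_t smul phi t) fs w = bool_pow (t / (1 + t)) (joint_distr (Phi_t smul phi t) fs) w"
proof (cases "w = []")
  case True
  then show ?thesis by (simp add: joint_distr_def bool_pow_def Psi_t_def interval_partitions_0)
next
  case False
  let ?cs = "map (\<lambda>i. fs ! i) w"
  have cs: "?cs \<in> lists {f. phi f = 0}" using assms(1,3) by auto
  have "bool_cum (Psi_t smul phi t) (nths ?cs V) = of_real (t / (1 + t)) * bool_cum (Phi_t smul phi t) (nths ?cs V)"
    if "P \<in> interval_partitions (length w)" "V \<in> P" for P V
    using that partition_on_interval_partitions[OF that(1)] assms(2)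
    by (intro bool_cum_Psi_t nths_in_lists[OF cs] nths_nonempty) (auto simp: partition_on_def)
  then show ?thesis
    using bool_cum_formula[of ?cs "Psi_t smul phi t"] False
    by (simp add: joint_distr_apply bool_pow_def bool_cum_joint_distr nths_map cong: sum.cong prod.cong)
qed

lemma joint_distr_Phi_t_free_pow:
  assumes "\<forall>f\<in>set fs. phi f = 0" "w \<in> lists {..<length fs}"
  shows "joint_distr (Phi_t smul phi t) fs w = free_pow (1 + t) (joint_distr phi_prod fs) w"
proof (cases "w = []")
  case True
  then show ?thesis by (simp add: joint_distr_def free_pow_def Phi_t_def NC_0)
next
  case False
  have "map (\<lambda>i. fs ! i) w \<in> lists {f. phi f = 0}" using assms by auto
  then show ?thesis
    using Phi_t_free_pow[of "map (\<lambda>i. fs ! i) w"] False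
    by (simp add: joint_distr_apply free_pow_def free_cum_joint_distr nths_map)
qed

lemma joint_distr_Psi_t_BN_transform:
  assumes "\<forall>f\<in>set fs. phi f = 0" "t \<ge> 0" "w \<in> lists {..<length fs}"
  shows "joint_distr (Psi_t smul phi t) fs w = bool_pow t (BN_transform t (joint_distr phi_prod fs)) w"
proof -
  have cum: "bool_cum (free_pow (1 + t) (joint_distr phi_prod fs)) v = bool_cum (joint_distr (Phi_t smul phi t) fs) v"
    if "v \<in> lists {..<length fs}" "v \<noteq> []" for v
  proof (rule bool_cum_eqI[where A = "{..<length fs}", OF that])
    fix bs assume bs: "bs \<in> lists {..<length fs}" "bs \<noteq> []"
    show "free_pow (1 + t) (joint_distr phi_prod fs) bs = (\<Sum>P\<in>interval_partitions (length bs).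
        \<Prod>V\<in>P. bool_cum (joint_distr (Phi_t smul phi t) fs) (nths bs V))"
      using joint_distr_Phi_t_free_pow[OF assms(1) bs(1)] bool_cum_formula[OF bs(2)] by simp
  qed
  have "bool_pow t (BN_transform t (joint_distr phi_prod fs)) w =
        bool_pow (t / (1 + t)) (joint_distr (Phi_t smul phi t) fs) w"
    unfolding bool_pow_def[of t] BN_transform_def bool_cum_bool_pow bool_pow_def[of "t / (1 + t)"]
  proof (intro sum.cong refl prod.cong)
    fix P V assume "P \<in> interval_partitions (length w)" "V \<in> P"
    then have "V \<subseteq> {..<length w}" "V \<noteq> {}"
      using partition_on_interval_partitions by (auto simp: partition_on_def)
    then show "of_real t * (of_real (1 / (1 + t)) * bool_cum (free_pow (1 + t) (joint_distr phi_prod fs)) (nths w V)) =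
        of_real (t / (1 + t)) * bool_cum (joint_distr (Phi_t smul phi t) fs) (nths w V)"
      using cum[OF nths_in_lists[OF assms(3)] nths_nonempty] by simp
  qed
  then show ?thesis using joint_distr_Psi_t_bool_pow_Phi_t[OF assms] by simp
qed

end
theorem proposition23:
  fixes smul :: "complex \<Rightarrow> 'b::ring_1 \<Rightarrow> 'b" and star :: "'b \<Rightarrow> 'b"
    and phi :: "'b \<Rightarrow> complex" and t :: real and fs :: "'b list"
  assumes "star_prob_space smul star phi"
    and "t \<ge> 0"
    and "fs \<noteq> []"
    and "\<forall>f\<in>set fs. phi f = 0"
  shows "free_cum (Psi_t smul phi t) fs = of_real t * bool_cum (\<lambda>as. phi (prod_list as)) fs
       \<and> (\<forall>w\<in>lists {..<length fs}.
            joint_distr (Psi_t smul phi t) fs w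
              = bool_pow t (BN_transform t (joint_distr (\<lambda>as. phi (prod_list as)) fs)) w
          \<and> joint_distr (Psi_t smul phi t) fs w
              = bool_pow (t / (1 + t)) (joint_distr (Phi_t smul phi t) fs) w)
       \<and> cfree_cum (Phi_t smul phi t) (Psi_t smul phi t) fs
           = of_real (1 + t) * bool_cum (\<lambda>as. phi (prod_list as)) fs"
proof -
  interpret star_probability_space smul star phi
    by unfold_locales (rule assms(1))
  have fs: "fs \<in> lists {f. phi f = 0}" using assms(4) by auto
  show ?thesis
    using free_cum_Psi_t[OF fs assms(3)] cfree_cum_Phi_t[OF fs assms(3)] bool_cum_phi[OF fs assms(3)]
      joint_distr_Psi_t_BN_transform[OF assms(4,2)] joint_distr_Psi_t_bool_pow_Phi_t[OF assms(4,2)]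
    by simp
qed

end
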